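(* Let $L$ be an invariant intrinsic location functional, $\mathbf X$ a periodic stationary process with period $1$, and $T\in(0,1]$. Then for all $t\in(0,T)$, $$f^{\mathbf X}_{L,T}(t)\le \max\Big(\Big\lfloor\frac{1-T}{t}\Big\rfloor,\Big\lfloor\frac{1-T}{T-t}\Big\rfloor\Big)+2.$$ Moreover, for every $t\in(0,T/2)$ such that $(1-T)/t$ is not an integer, and for every $t\in[T/2,T)$ such that $(1-T)/(T-t)$ is not an integer, there exist an invariant intrinsic location functional $L$ and a periodic stationary process $\mathbf X$ with period $1$ for which equality holds at $t$.
   Context: Let $H$ be a set of functions $\mathbb R\to\mathbb R$ with period $1$, invariant under shifts ($\theta_cg(x)=g(x+c)$), with the cylindrical $\sigma$-field; $\mathcal I$ is the set of compact intervals $[a,b]$, $a<b$. An intrinsic location functional is a map $L:H\times\mathcal I\to\mathbb R\cup\{\infty\}$ such that: (i) $L(\cdot,I)$ is measurable; (ii) $L(g,I)\in I\cup\{\infty\}$; (iii) $L(g,I)=L(\theta_cg,I-c)+c$ (with $\infty+c=\infty$); (iv) if $I_2\subseteq I_1$ and $L(g,I_1)\in I_2$ then $L(g,I_2)=L(g,I_1)$; (v) if $I_2\subseteq I_1$ and $L(g,I_2)\ne\infty$ then $L(g,I_1)\neq\infty$. It is invariant if moreover $L(g,I)\ne\infty$ always and $L(g,[0,1])=L(g,[a,a+1])\pmod1$ for all $a\in\mathbb R$, $g\in H$. A periodic stationary process with period $1$ is a stationary process with continuous sample paths of period $1$ lying in $H$. $f^{\mathbf X}_{L,T}$ denotes the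 càdlàg density on $(0,T)$ of the law of $L(\mathbf X,[0,T])$. *)

theory Defs
  imports "HOL-Probability.Probability"
begin

definition path_space :: "(real \<Rightarrow> real) measure" where
  "path_space = Pi\<^sub>M UNIV (\<lambda>_. borel)"

definition shift :: "real \<Rightarrow> (real \<Rightarrow> real) \<Rightarrow> (real \<Rightarrow> real)" where
  "shift c g = (\<lambda>x. g (x + c))"

definition periodic_shift_class :: "(real \<Rightarrow> real) set \<Rightarrow> bool" where
  "periodic_shift_class H \<longleftrightarrow>
     (\<forall>g\<in>H. \<forall>x. g (x + 1) = g x) \<and> (\<forall>g\<in>H. \<forall>c. shift c g \<in> H)"

definition H_space :: "(real \<Rightarrow> real) set \<Rightarrow> (real \<Rightarrow> real) measure" where
  "H_space H = restrict_space path_space H"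

text \<open>Intrinsic location functional. The compact interval [a,b], a<b, is encoded by its
  endpoints; the value infinity is the ereal PInfty.\<close>
definition intrinsic_location_functional ::
  "(real \<Rightarrow> real) set \<Rightarrow> ((real \<Rightarrow> real) \<Rightarrow> real \<Rightarrow> real \<Rightarrow> ereal) \<Rightarrow> bool" where
  "intrinsic_location_functional H L \<longleftrightarrow>
     (\<forall>a b. a < b \<longrightarrow> (\<lambda>g. L g a b) \<in> borel_measurable (H_space H)) \<and>
     (\<forall>g\<in>H. \<forall>a b. a < b \<longrightarrow> L g a b \<in> ereal ` {a..b} \<union> {\<infinity>}) \<and>
     (\<forall>g\<in>H. \<forall>a b c. a < b \<longrightarrow> L g a b = L (shift c g) (a - c) (b - c) + ereal c) \<and>
     (\<forall>g\<in>H. \<forall>a1 b1 a2 b2. a1 < b1 \<and> a2 < b2 \<and> a1 \<le> a2 \<and> b2 \<le> b1 \<longrightarrow>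
        L g a1 b1 \<in> ereal ` {a2..b2} \<longrightarrow> L g a2 b2 = L g a1 b1) \<and>
     (\<forall>g\<in>H. \<forall>a1 b1 a2 b2. a1 < b1 \<and> a2 < b2 \<and> a1 \<le> a2 \<and> b2 \<le> b1 \<longrightarrow>
        L g a2 b2 \<noteq> \<infinity> \<longrightarrow> L g a1 b1 \<noteq> \<infinity>)"

definition invariant_ILF ::
  "(real \<Rightarrow> real) set \<Rightarrow> ((real \<Rightarrow> real) \<Rightarrow> real \<Rightarrow> real \<Rightarrow> ereal) \<Rightarrow> bool" where
  "invariant_ILF H L \<longleftrightarrow>
     intrinsic_location_functional H L \<and>
     (\<forall>g\<in>H. \<forall>a b. a < b \<longrightarrow> L g a b \<noteq> \<infinity>) \<and>
     (\<forall>g\<in>H. \<forall>a. frac (real_of_ereal (L g 0 1)) = frac (real_of_ereal (L g a (a + 1))))"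

definition periodic_stationary_process ::
  "(real \<Rightarrow> real) set \<Rightarrow> 'w measure \<Rightarrow> ('w \<Rightarrow> real \<Rightarrow> real) \<Rightarrow> bool" where
  "periodic_stationary_process H M X \<longleftrightarrow>
     prob_space M \<and>
     X \<in> measurable M path_space \<and>
     (\<forall>\<omega>\<in>space M. X \<omega> \<in> H \<and> continuous_on UNIV (X \<omega>)) \<and>
     (\<forall>c. distr M path_space (\<lambda>\<omega>. shift c (X \<omega>)) = distr M path_space X)"

definition cadlag_density_on ::
  "real \<Rightarrow> 'w measure \<Rightarrow> ('w \<Rightarrow> ereal) \<Rightarrow> (real \<Rightarrow> real) \<Rightarrow> bool" where
  "cadlag_density_on T M Y f \<longleftrightarrow>
     (\<forall>t\<in>{0<..<T}. 0 \<le> f t \<and> continuous (at_right t) f \<and> (\<exists>l. (f \<longlongrightarrow> l) (at_left t))) \<and>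
     (\<forall>A\<in>sets borel. A \<subseteq> {0<..<T} \<longrightarrow>
        emeasure M {\<omega>\<in>space M. Y \<omega> \<in> ereal ` A} = (\<integral>\<^sup>+x\<in>A. ennreal (f x) \<partial>lborel))"

definition density_bound :: "real \<Rightarrow> real \<Rightarrow> real" where
  "density_bound T t = max (of_int \<lfloor>(1 - T) / t\<rfloor>) (of_int \<lfloor>(1 - T) / (T - t)\<rfloor>) + 2"

end

theory Submission
  imports Defs
begin

text \<open>
  Let \<open>G = 1 - T\<close>. For a fixed path, call \<open>s\<close> a hit if the location in
  \<open>[s, s + T]\<close> lies at offset \<open>[t, t + h)\<close> from \<open>s\<close>. Invariance gives every unit window a location
  of one and the same phase \<open>\<tau>\<close>, so a window starting outside the gap \<open>(\<tau>, \<tau> + G)\<close> contains a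
  point of phase \<open>\<tau>\<close> and has its location there: such hits lie in an interval of length \<open>h\<close>.
  Two hits closer than \<open>\<delta> = min t (T - t - h)\<close> both inherit the location of the union of
  their windows, so they are closer than \<open>h\<close>. Covering the gap by \<open>m = \<lceil>G / \<delta>\<rceil>\<close> cells, a
  grid of \<open>N\<close> starting points per period contains at most \<open>(m + 1) (h N + 1)\<close> hits. By
  stationarity every grid point is a hit with probability \<open>P(L \<in> [t, t + h))\<close>, hence this
  probability is at most \<open>(m + 1) h\<close>, and right continuity of the density yields the bound.

  A cosine wave with uniform random phase is periodic and stationary. Give finitely
  many sites on the circle distinct levels and let \<open>L\<close> pick the first occurrence of the
  highest visible site; this is an invariant intrinsic location functional, and the density of
  \<open>L(X, [0, T])\<close> at \<open>t\<close> counts the sites not followed within \<open>T - t\<close> or preceded within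
  \<open>t\<close> by a higher site. A top site together with a comb of \<open>\<lfloor>G / min t (T - t)\<rfloor> + 1\<close>
  sites at spacing slightly above \<open>min t (T - t)\<close> makes every site count.
\<close>

section \<open>Real-valued locations\<close>

lemma shift_shift: "shift c (shift d g) = shift (d + c) g"
  by (simp add: shift_def algebra_simps)

lemma periodic_add_of_int:
  fixes g :: "real \<Rightarrow> 'a"
  assumes "\<And>x. g (x + 1) = g x"
  shows "g (x + of_int k) = g x"
proof (induct k arbitrary: x rule: int_induct[where k=0])
  case (step1 i)
  have "g (x + of_int (i + 1)) = g (x + of_int i + 1)" by (simp add: algebra_simps)
  also have "\<dots> = g x" using assms step1 by simp
  finally show ?case .
next
  case (step2 i)
  have "g (x + of_int (i - 1)) = g (x + of_int (i - 1) + 1)" using assms by metis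
  also have "\<dots> = g (x + of_int i)" by (simp add: algebra_simps)
  finally show ?case using step2 by simp
qed simp

lemma shift_of_int:
  assumes "periodic_shift_class H" "g \<in> H"
  shows "shift (of_int k) g = g"
  using assms periodic_add_of_int[of g] unfolding periodic_shift_class_def shift_def by auto

definition loc :: "((real \<Rightarrow> real) \<Rightarrow> real \<Rightarrow> real \<Rightarrow> ereal) \<Rightarrow> (real \<Rightarrow> real) \<Rightarrow> real \<Rightarrow> real \<Rightarrow> real"
  where "loc L g a b = real_of_ereal (L g a b)"

context
  fixes H and L :: "(real \<Rightarrow> real) \<Rightarrow> real \<Rightarrow> real \<Rightarrow> ereal"
  assumes inv: "invariant_ILF H L"
begin

lemma invariant_ILF_loc:
  assumes "g \<in> H" "a < b"
  shows "L g a b = ereal (loc L g a b)" "a \<le> loc L g a b" "loc L g a b \<le> b"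
proof -
  have "L g a b \<in> ereal ` {a..b} \<union> {\<infinity>}" "L g a b \<noteq> \<infinity>"
    using assms inv unfolding invariant_ILF_def intrinsic_location_functional_def by auto
  then obtain x where "L g a b = ereal x" "a \<le> x" "x \<le> b" by auto
  then show "L g a b = ereal (loc L g a b)" "a \<le> loc L g a b" "loc L g a b \<le> b"
    by (auto simp: loc_def)
qed

lemma loc_shift:
  assumes "periodic_shift_class H" "g \<in> H" "a < b"
  shows "loc L g a b = loc L (shift c g) (a - c) (b - c) + c"
proof -
  have sH: "shift c g \<in> H" using assms unfolding periodic_shift_class_def by auto
  have "L g a b = L (shift c g) (a - c) (b - c) + ereal c"
    using assms inv unfolding invariant_ILF_def intrinsic_location_functional_def by auto
  also have "L (shift c g) (a - c) (b - c) = ereal (loc L (shift c g) (a - c) (b - c))"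
    using invariant_ILF_loc[OF sH] assms(3) by simp
  finally show ?thesis using invariant_ILF_loc[OF assms(2,3)] by simp
qed

lemma loc_subinterval:
  assumes "g \<in> H" "a1 < b1" "a2 < b2" "a1 \<le> a2" "b2 \<le> b1"
    and "a2 \<le> loc L g a1 b1" "loc L g a1 b1 \<le> b2"
  shows "loc L g a2 b2 = loc L g a1 b1"
proof -
  have "L g a1 b1 \<in> ereal ` {a2..b2}" using invariant_ILF_loc[OF assms(1,2)] assms(6,7) by auto
  then have "L g a2 b2 = L g a1 b1"
    using assms inv unfolding invariant_ILF_def intrinsic_location_functional_def by blast
  then show ?thesis by (simp add: loc_def)
qed

lemma frac_loc_unit_window:
  assumes "g \<in> H"
  shows "frac (loc L g a (a + 1)) = frac (loc L g 0 1)"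
  using assms inv unfolding invariant_ILF_def loc_def by auto

end

section \<open>Counting hits on a periodic grid\<close>

lemma card_le_diameter:
  fixes F :: "int set" and c :: real
  assumes "finite F" "\<And>a b. a \<in> F \<Longrightarrow> b \<in> F \<Longrightarrow> \<bar>real_of_int a - real_of_int b\<bar> < c" "0 \<le> c"
  shows "real (card F) \<le> c + 1"
proof (cases "F = {}")
  case True then show ?thesis using assms by simp
next
  case False
  have sub: "F \<subseteq> {Min F..Max F}" using assms(1) by auto
  have "card F \<le> card {Min F..Max F}" by (rule card_mono[OF _ sub]) simp
  also have "\<dots> = nat (Max F - Min F + 1)" by simp
  finally have "real (card F) \<le> real (nat (Max F - Min F + 1))" by simp
  moreover have "Min F \<le> Max F" using False assms(1) by (simp add: Min_le Max_in)
  then have "Max F - Min F + 1 \<ge> 0" by simp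
  moreover have "real_of_int (Max F) - real_of_int (Min F) < c"
    using assms(2)[of "Max F" "Min F"] False assms(1) by auto
  ultimately show ?thesis by linarith
qed

lemma card_le_scaled_diameter:
  fixes F :: "int set" and N :: int
  assumes "finite F" "0 < N" "0 \<le> h"
    and "\<And>a b. a \<in> F \<Longrightarrow> b \<in> F \<Longrightarrow> \<bar>of_int a / of_int N - of_int b / of_int N\<bar> < h"
  shows "real (card F) \<le> h * of_int N + 1"
proof (rule card_le_diameter)
  fix a b assume ab: "a \<in> F" "b \<in> F"
  have "\<bar>of_int a - of_int b\<bar> = \<bar>of_int a / of_int N - of_int b / (of_int N::real)\<bar> * of_int N"
    using assms(2) by (simp add: field_simps abs_mult)
  also have "\<dots> < h * of_int N" using assms(2) assms(4)[OF ab] by simp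
  finally show "\<bar>real_of_int a - real_of_int b\<bar> < h * of_int N" .
qed (use assms in auto)

lemma card_periodic_samples_shift:
  fixes S :: "real \<Rightarrow> bool" and N K0 :: int
  assumes per: "\<And>s. S (s + 1) = S s" and "0 < N" "0 \<le> K0" "K0 \<le> N"
  shows "card {k \<in> {0..<N}. S (of_int k / of_int N)} = card {k \<in> {K0..<K0+N}. S (of_int k / of_int N)}"
    (is "card ?A = card ?B")
proof (rule bij_betw_same_card)
  define \<phi> where "\<phi> k = (if k < K0 then k + N else k)" for k :: int
  have perN: "S (of_int (k + N) / of_int N) = S (of_int k / of_int N)" for k
  proof -
    have "of_int (k + N) / of_int N = of_int k / (of_int N::real) + 1" using assms(2) by (simp add: field_simps)
    then show ?thesis using per by simp
  qed
  show "bij_betw \<phi> ?A ?B"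
  proof (rule bij_betw_imageI)
    show "inj_on \<phi> ?A" unfolding inj_on_def \<phi>_def using assms by auto
    show "\<phi> ` ?A = ?B"
    proof
      show "\<phi> ` ?A \<subseteq> ?B" unfolding \<phi>_def using assms perN by auto
      show "?B \<subseteq> \<phi> ` ?A"
      proof
        fix k assume k: "k \<in> ?B"
        show "k \<in> \<phi> ` ?A"
        proof (cases "k < N")
          case True
          then have "k \<in> ?A" "\<phi> k = k" using k assms unfolding \<phi>_def by auto
          then show ?thesis by (metis image_eqI)
        next
          case False
          then have "k - N \<in> ?A" "\<phi> (k - N) = k" using k assms perN[of "k - N"] unfolding \<phi>_def by auto
          then show ?thesis by (metis image_eqI)
        qed
      qed
    qed
  qed
qed

lemma mem_grid_cell:
  assumes "\<tau> < s" "s < \<tau> + G" "G \<le> real m * \<delta>" "0 < \<delta>"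
  obtains i :: nat where "i < m" "\<tau> + real i * \<delta> < s" "s \<le> \<tau> + (real i + 1) * \<delta>"
proof
  define j where "j = \<lceil>(s - \<tau>) / \<delta>\<rceil>"
  have j1: "1 \<le> j" using assms unfolding j_def by (simp add: le_ceiling_iff)
  have "(s - \<tau>) / \<delta> < real m" using assms by (simp add: divide_less_eq)
  then have jm: "j \<le> int m" unfolding j_def by (simp add: ceiling_le_iff)
  have "real_of_int j - 1 < (s - \<tau>) / \<delta>" "(s - \<tau>) / \<delta> \<le> real_of_int j"
    unfolding j_def by linarith+
  then have a: "(real_of_int j - 1) * \<delta> < s - \<tau>" "s - \<tau> \<le> real_of_int j * \<delta>"
    using assms by (simp_all add: field_simps)
  have ij: "real (nat (j - 1)) = real_of_int j - 1" using j1 by simp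
  show "nat (j - 1) < m" using j1 jm by simp
  show "\<tau> + real (nat (j - 1)) * \<delta> < s" "s \<le> \<tau> + (real (nat (j - 1)) + 1) * \<delta>"
    using a unfolding ij by (simp_all add: algebra_simps)
qed

text \<open>Cells of length \<open>\<delta>\<close> cover the gap; inside each cell, and outside the gap, the hits span
  less than \<open>h\<close>.\<close>

lemma card_hits_in_window_le:
  fixes S :: "real \<Rightarrow> bool" and B :: "int set" and N :: int
  assumes finB: "finite B"
    and window: "\<And>k. k \<in> B \<Longrightarrow> \<tau> \<le> of_int k / of_int N \<and> of_int k / of_int N < \<tau> + 1"
    and hit: "\<And>k. k \<in> B \<Longrightarrow> S (of_int k / of_int N)"
    and outside_gap: "\<And>s. \<tau> \<le> s \<Longrightarrow> s < \<tau> + 1 \<Longrightarrow> \<not> (\<tau> < s \<and> s < \<tau> + G) \<Longrightarrow> S s \<Longrightarrow> \<alpha> < s \<and> s \<le> \<alpha> + h"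
    and close: "\<And>s1 s2. s1 < s2 \<Longrightarrow> s2 - s1 < \<delta> \<Longrightarrow> S s1 \<Longrightarrow> S s2 \<Longrightarrow> s2 - s1 < h"
    and pos: "0 < \<delta>" "0 < h" "0 < N" and mG: "G \<le> real m * \<delta>"
  shows "real (card B) \<le> (real m + 1) * (h * of_int N + 1)"
proof -
  define Ai where "Ai i = (if i < m then {k \<in> B. \<tau> + real i * \<delta> < of_int k / of_int N \<and> of_int k / of_int N \<le> \<tau> + (real i + 1) * \<delta>}
      else {k \<in> B. \<not> (\<tau> < of_int k / of_int N \<and> of_int k / of_int N < \<tau> + G)})" for i :: nat
  have cover: "B \<subseteq> (\<Union>i\<in>{..m}. Ai i)"
  proof
    fix k assume k: "k \<in> B"
    let ?s = "of_int k / (of_int N :: real)"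
    show "k \<in> (\<Union>i\<in>{..m}. Ai i)"
    proof (cases "\<tau> < ?s \<and> ?s < \<tau> + G")
      case False then have "k \<in> Ai m" using k unfolding Ai_def by simp
      then show ?thesis by blast
    next
      case True
      then obtain i where "i < m" "\<tau> + real i * \<delta> < ?s" "?s \<le> \<tau> + (real i + 1) * \<delta>"
        using mem_grid_cell mG pos(1) by blast
      then have "k \<in> Ai i" using k unfolding Ai_def by simp
      then show ?thesis using \<open>i < m\<close> by auto
    qed
  qed
  have cardAi: "real (card (Ai i)) \<le> h * of_int N + 1" for i
  proof (rule card_le_scaled_diameter)
    show "finite (Ai i)" using finB unfolding Ai_def by auto
    fix a b assume ab: "a \<in> Ai i" "b \<in> Ai i"
    let ?a = "of_int a / (of_int N :: real)" and ?b = "of_int b / (of_int N :: real)"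
    have Sab: "S ?a" "S ?b" using ab hit unfolding Ai_def by (auto split: if_splits)
    show "\<bar>?a - ?b\<bar> < h"
    proof (cases "i < m")
      case True
      then have "\<tau> + real i * \<delta> < ?a" "?a \<le> \<tau> + real i * \<delta> + \<delta>"
        "\<tau> + real i * \<delta> < ?b" "?b \<le> \<tau> + real i * \<delta> + \<delta>"
        using ab unfolding Ai_def by (auto simp: distrib_right)
      then have "\<bar>?a - ?b\<bar> < \<delta>" by linarith
      then show ?thesis using close[of ?a ?b] close[of ?b ?a] Sab pos
        by (cases ?a ?b rule: linorder_cases) auto
    next
      case False
      then have "a \<in> B" "\<not> (\<tau> < ?a \<and> ?a < \<tau> + G)" "b \<in> B" "\<not> (\<tau> < ?b \<and> ?b < \<tau> + G)"
        using ab unfolding Ai_def by auto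
      then have "\<alpha> < ?a \<and> ?a \<le> \<alpha> + h" "\<alpha> < ?b \<and> ?b \<le> \<alpha> + h"
        using outside_gap window Sab by blast+
      then show ?thesis by auto
    qed
  qed (use pos in auto)
  have "card B \<le> card (\<Union>i\<in>{..m}. Ai i)" by (rule card_mono[OF _ cover]) (auto simp: Ai_def finB)
  also have "\<dots> \<le> (\<Sum>i\<in>{..m}. card (Ai i))" by (rule card_UN_le) simp
  finally have "real (card B) \<le> (\<Sum>i\<in>{..m}. real (card (Ai i)))" by (simp flip: of_nat_sum)
  also have "\<dots> \<le> (\<Sum>i\<in>{..m}. h * of_int N + 1)" by (rule sum_mono) (use cardAi in auto)
  also have "\<dots> = (real m + 1) * (h * of_int N + 1)" by simp
  finally show ?thesis .
qed

lemma card_periodic_hits_le: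
  fixes S :: "real \<Rightarrow> bool" and N :: int
  assumes per: "\<And>s. S (s + 1) = S s"
    and tau: "0 \<le> \<tau>" "\<tau> < 1"
    and outside_gap: "\<And>s. \<tau> \<le> s \<Longrightarrow> s < \<tau> + 1 \<Longrightarrow> \<not> (\<tau> < s \<and> s < \<tau> + G) \<Longrightarrow> S s \<Longrightarrow> \<alpha> < s \<and> s \<le> \<alpha> + h"
    and close: "\<And>s1 s2. s1 < s2 \<Longrightarrow> s2 - s1 < \<delta> \<Longrightarrow> S s1 \<Longrightarrow> S s2 \<Longrightarrow> s2 - s1 < h"
    and pos: "0 < \<delta>" "0 < h" "0 < N" and mG: "G \<le> real m * \<delta>"
  shows "real (card {k \<in> {0..<N}. S (of_int k / of_int N)}) \<le> (real m + 1) * (h * of_int N + 1)"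
proof -
  define K0 where "K0 = \<lceil>\<tau> * of_int N\<rceil>"
  have tn: "0 \<le> \<tau> * of_int N" "\<tau> * of_int N \<le> of_int N" using tau pos by (simp_all add: mult_le_cancel_right1)
  have K0: "0 \<le> K0" "K0 \<le> N" using tn unfolding K0_def by (auto simp: ceiling_le_iff)
  define B where "B = {k \<in> {K0..<K0+N}. S (of_int k / of_int N)}"
  have "real (card B) \<le> (real m + 1) * (h * of_int N + 1)"
  proof (rule card_hits_in_window_le[OF _ _ _ outside_gap close pos mG])
    show "finite B" unfolding B_def by (rule finite_subset[of _ "{K0..<K0+N}"]) auto
    fix k assume "k \<in> B"
    then have k: "K0 \<le> k" "k < K0 + N" "S (of_int k / of_int N)" unfolding B_def by auto
    then show "S (of_int k / of_int N)" by simp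
    have "\<tau> * of_int N \<le> of_int K0" "of_int K0 < \<tau> * of_int N + 1" unfolding K0_def by linarith+
    then have "\<tau> * of_int N \<le> of_int k" "of_int k < \<tau> * of_int N + of_int N" using k by linarith+
    then show "\<tau> \<le> of_int k / of_int N \<and> of_int k / of_int N < \<tau> + 1"
      using pos by (simp add: divide_less_eq le_divide_eq algebra_simps)
  qed
  then show ?thesis using card_periodic_samples_shift[of S, OF per pos(3) K0] unfolding B_def by simp
qed

section \<open>Hits of a fixed path\<close>

context
  fixes H :: "(real \<Rightarrow> real) set" and L :: "(real \<Rightarrow> real) \<Rightarrow> real \<Rightarrow> real \<Rightarrow> ereal" and g :: "real \<Rightarrow> real"
    and T t h :: real
  assumes psc: "periodic_shift_class H" and inv: "invariant_ILF H L" and gH: "g \<in> H"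
    and tpos: "0 < t" and hpos: "0 < h" and tT: "t + h < T" and T1: "T \<le> 1"
begin

definition window_hit where "window_hit s \<longleftrightarrow> t \<le> loc L g s (s + T) - s \<and> loc L g s (s + T) - s < t + h"

private lemma T_pos: "0 < T" using tpos hpos tT by linarith

lemma window_hit_periodic: "window_hit (s + 1) = window_hit s"
proof -
  have "loc L g (s + 1) (s + 1 + T) = loc L (shift 1 g) (s + 1 - 1) (s + 1 + T - 1) + 1"
    using loc_shift[OF inv psc gH, of "s+1" "s+1+T" 1] T_pos by simp
  also have "shift 1 g = g" using shift_of_int[OF psc gH, of 1] by simp
  finally have "loc L g (s + 1) (s + 1 + T) = loc L g s (s + T) + 1" by (simp add: algebra_simps)
  then show ?thesis unfolding window_hit_def by (simp add: algebra_simps)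
qed

definition phase where "phase = frac (loc L g 0 1)"

text \<open>The location of the unit window around \<open>[s, s + T]\<close> is its unique point of phase
  \<open>phase\<close>; when that point is \<open>p \<in> [s, s + T]\<close>, the subinterval property moves it to \<open>[s, s + T]\<close>.\<close>

lemma frac_loc_window_eq_phase:
  assumes "s \<le> p" "p \<le> s + T" "frac p = phase"
  shows "frac (loc L g s (s + T)) = phase"
proof (cases "T = 1")
  case True
  then show ?thesis using frac_loc_unit_window[OF inv gH, of s] unfolding phase_def by simp
next
  case False
  then have T1': "T < 1" using T1 by simp
  define a where "a = s - (1 - T) / 2"
  define l1 where "l1 = loc L g a (a + 1)"
  have l1: "a \<le> l1" "l1 \<le> a + 1" using invariant_ILF_loc[OF inv gH, of a "a+1"] unfolding l1_def by auto
  have fl1: "frac l1 = phase" using frac_loc_unit_window[OF inv gH, of a] unfolding l1_def phase_def by simp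
  obtain k :: int where k: "l1 = p + of_int k" using fl1 assms(3) by (metis frac_eqE)
  have h2: "0 < (1 - T) / 2" "(1 - T) / 2 < 1 - T" using T1' by auto
  have "a < p" "p < a + 1" using assms h2 unfolding a_def by linarith+
  then have "-1 < real_of_int k" "real_of_int k < 1" using l1 k by auto
  then have "k = 0" by linarith
  then have lp: "l1 = p" using k by simp
  have f1: "a < a + 1" "s < s + T" "a \<le> s" "s + T \<le> a + 1" using T_pos h2 unfolding a_def by linarith+
  have f2: "s \<le> loc L g a (a + 1)" "loc L g a (a + 1) \<le> s + T" using lp assms unfolding l1_def by auto
  have "loc L g s (s + T) = l1"
    unfolding l1_def by (rule loc_subinterval[OF inv gH f1 f2])
  then show ?thesis using lp assms by simp
qed

lemma phase_bounds: "0 \<le> phase" "phase < 1" unfolding phase_def by (simp_all add: frac_lt_1)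

lemma window_hit_outside_gap:
  assumes "phase \<le> s" "s < phase + 1" "\<not> (phase < s \<and> s < phase + (1 - T))" "window_hit s"
  shows "phase + 1 - t - h < s \<and> s \<le> phase + 1 - t"
proof -
  define l where "l = loc L g s (s + T)"
  have fl: "frac l = phase"
  proof (cases "s = phase")
    case True
    show ?thesis unfolding l_def by (rule frac_loc_window_eq_phase[of s phase]) (use True T_pos phase_def in auto)
  next
    case False
    then have "phase + (1 - T) \<le> s" using assms by auto
    then show ?thesis unfolding l_def
      by (intro frac_loc_window_eq_phase[of s "phase + 1"]) (use assms(2) phase_bounds frac_add_of_int_right[of phase 1] in auto)
  qed
  have fr: "frac (phase + 1) = phase" using frac_add_of_int_right[of phase 1] phase_bounds by simp
  obtain k :: int where k: "l = phase + 1 + of_int k" using fl fr by (metis frac_eqE)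
  have lr: "s + t \<le> l" "l < s + t + h" using assms(4) unfolding window_hit_def l_def by auto
  have "-1 < real_of_int k" "real_of_int k < 1" using lr k assms tpos tT T1 by auto
  then have "k = 0" by linarith
  then show ?thesis using k lr by auto
qed

text \<open>The location of the union \<open>[s1, s2 + T]\<close> passes to each window containing it, and the
  offset constraints force both windows to contain it.\<close>

lemma window_hits_close:
  assumes "s1 < s2" "s2 - s1 < t" "s2 - s1 < T - t - h" "window_hit s1" "window_hit s2"
  shows "s2 - s1 < h"
proof -
  define x where "x = loc L g s1 (s2 + T)"
  have x: "s1 \<le> x" "x \<le> s2 + T" using invariant_ILF_loc[OF inv gH, of s1 "s2 + T"] assms(1) T_pos unfolding x_def by auto
  have l1: "x \<le> s1 + T \<Longrightarrow> loc L g s1 (s1 + T) = x" unfolding x_def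
    by (rule loc_subinterval[OF inv gH]) (use assms(1) T_pos x x_def in auto)
  have l2: "s2 \<le> x \<Longrightarrow> loc L g s2 (s2 + T) = x" unfolding x_def
    by (rule loc_subinterval[OF inv gH]) (use assms(1) T_pos x x_def in auto)
  have S1: "t \<le> loc L g s1 (s1 + T) - s1" "loc L g s1 (s1 + T) - s1 < t + h"
   and S2: "t \<le> loc L g s2 (s2 + T) - s2" "loc L g s2 (s2 + T) - s2 < t + h"
    using assms(4,5) unfolding window_hit_def by auto
  consider "x < s2" | "s1 + T < x" | "s2 \<le> x \<and> x \<le> s1 + T" by linarith
  then show ?thesis
  proof cases
    case 1
    then have "x \<le> s1 + T" using assms T_pos tpos tT hpos by linarith
    then show ?thesis using l1 S1 1 assms by auto
  next
    case 2
    then have "s2 \<le> x" using assms tT hpos by linarith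
    then show ?thesis using l2 S2 2 assms by auto
  next
    case 3
    then show ?thesis using l1 l2 S1 S2 by auto
  qed
qed

lemma card_window_hits_le:
  assumes "0 < \<delta>" "\<delta> \<le> t" "\<delta> \<le> T - t - h" "1 - T \<le> real m * \<delta>" "0 < N"
  shows "real (card {k \<in> {0..<N}. window_hit (of_int k / of_int N)}) \<le> (real m + 1) * (h * of_int N + 1)"
  by (rule card_periodic_hits_le[where \<tau>=phase and G="1-T" and \<alpha>="phase + 1 - t - h" and \<delta>=\<delta>])
     (use assms window_hit_periodic phase_bounds window_hit_outside_gap window_hits_close hpos in auto)

end

section \<open>The upper bound\<close>

lemma space_path_space[simp]: "space path_space = UNIV"
  unfolding path_space_def by (simp add: space_PiM)

lemma measurable_shift:
  assumes "X \<in> measurable M path_space"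
  shows "(\<lambda>\<omega>. shift s (X \<omega>)) \<in> measurable M path_space"
proof -
  have "(\<lambda>\<omega> x. X \<omega> (x + s)) \<in> measurable M (Pi\<^sub>M UNIV (\<lambda>_. borel))"
  proof (rule measurable_PiM_single')
    fix i :: real
    show "(\<lambda>\<omega>. X \<omega> (i + s)) \<in> borel_measurable M"
      using measurable_compose[OF assms[unfolded path_space_def] measurable_component_singleton[of "i + s" UNIV "\<lambda>_. borel"]]
      by simp
  qed simp
  then show ?thesis unfolding shift_def path_space_def by simp
qed

lemma
  assumes "periodic_stationary_process H M X"
  shows periodic_stationary_process_prob_space: "prob_space M"
    and periodic_stationary_process_measurable: "X \<in> measurable M path_space"
    and periodic_stationary_process_path: "\<omega> \<in> space M \<Longrightarrow> X \<omega> \<in> H"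
    and periodic_stationary_process_stationary:
      "distr M path_space (\<lambda>\<omega>. shift c (X \<omega>)) = distr M path_space X"
  using assms unfolding periodic_stationary_process_def by auto

lemma le_of_mult_le_affine:
  fixes x a b :: real
  assumes "\<And>n::nat. 0 < n \<Longrightarrow> x * real n \<le> a * real n + b"
  shows "x \<le> a"
proof (rule ccontr)
  assume "\<not> x \<le> a"
  then have pos: "0 < x - a" by simp
  obtain n :: nat where n: "b / (x - a) < real n" using reals_Archimedean2 by blast
  have "0 < n"
  proof (rule ccontr)
    assume "\<not> 0 < n"
    then have "b < 0" using n pos by (simp add: divide_less_0_iff)
    moreover have "x * 1 \<le> a * 1 + b" using assms[of 1] by simp
    ultimately show False using pos by simp
  qed
  moreover have "b < real n * (x - a)" using n pos by (simp add: divide_less_eq mult.commute)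
  ultimately show False using assms[of n] by (simp add: algebra_simps)
qed

lemma density_bound_cell_cover:
  assumes "0 < t" "t < T" "T \<le> 1"
  obtains h0 where "0 < h0"
    "\<And>h. 0 < h \<Longrightarrow> h < h0 \<Longrightarrow> t + h < T \<and> (\<exists>\<delta> m. 0 < \<delta> \<and> \<delta> \<le> t \<and> \<delta> \<le> T - t - h \<and>
        1 - T \<le> real m * \<delta> \<and> real m + 1 \<le> density_bound T t)"
proof
  define G where "G = 1 - T"
  define D where "D = real_of_int (max \<lfloor>G / t\<rfloor> \<lfloor>G / (T - t)\<rfloor> + 1)"
  have G0: "0 \<le> G" using assms unfolding G_def by simp
  have D: "density_bound T t = D + 1" unfolding density_bound_def D_def G_def by simp
  have "0 \<le> \<lfloor>G / t\<rfloor>" using G0 assms by simp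
  then have D1: "1 \<le> D" unfolding D_def by linarith
  have "G / t < D" "G / (T - t) < D" unfolding D_def by linarith+
  then have Gt: "G \<le> D * t" and GTt: "G < D * (T - t)"
    using assms by (simp_all add: divide_less_eq mult.commute)
  show "0 < T - t - G / D" using GTt D1 by (simp add: divide_less_eq mult.commute)
  fix h assume h: "0 < h" "h < T - t - G / D"
  have "0 \<le> G / D" using G0 D1 by simp
  then have tT: "t + h < T" using h by linarith
  define \<delta> where "\<delta> = min t (T - t - h)"
  have d: "0 < \<delta>" "\<delta> \<le> t" "\<delta> \<le> T - t - h" using assms tT unfolding \<delta>_def by auto
  have "G / D \<le> T - t - h" using h by simp
  then have "G \<le> D * (T - t - h)" using D1 by (simp add: divide_le_eq mult.commute)
  then have "G / \<delta> \<le> D" using Gt d unfolding \<delta>_def by (simp add: min_def divide_le_eq mult.commute)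
  then have m: "\<lceil>G / \<delta>\<rceil> \<le> max \<lfloor>G / t\<rfloor> \<lfloor>G / (T - t)\<rfloor> + 1" unfolding D_def by (simp add: ceiling_le_iff)
  define m where "m = nat \<lceil>G / \<delta>\<rceil>"
  have "0 \<le> G / \<delta>" using G0 d by simp
  then have mr: "real m = of_int \<lceil>G / \<delta>\<rceil>" unfolding m_def by simp
  have "G / \<delta> \<le> real m" unfolding mr by linarith
  then have "1 - T \<le> real m * \<delta>" using d unfolding G_def by (simp add: divide_le_eq)
  moreover have "real m + 1 \<le> density_bound T t" using m unfolding mr D D_def by linarith
  ultimately show "t + h < T \<and> (\<exists>\<delta> m. 0 < \<delta> \<and> \<delta> \<le> t \<and> \<delta> \<le> T - t - h \<and>
        1 - T \<le> real m * \<delta> \<and> real m + 1 \<le> density_bound T t)" using tT d by blast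
qed

lemma (in prob_space) card_mult_prob_le_overlap:
  assumes I: "finite I" and E: "\<And>k. E k \<in> events" "\<And>k. prob (E k) = p"
    and C: "\<And>\<omega>. \<omega> \<in> space M \<Longrightarrow> real (card {k \<in> I. \<omega> \<in> E k}) \<le> C" and "0 \<le> C"
  shows "real (card I) * p \<le> C"
proof -
  have "(\<Sum>k\<in>I. indicator (E k) \<omega>) \<le> ennreal C" if "\<omega> \<in> space M" for \<omega>
  proof -
    have "(\<Sum>k\<in>I. indicator (E k) \<omega> :: ennreal) = of_nat (card {k \<in> I. \<omega> \<in> E k})"
      using I by (simp add: indicator_def Int_def conj_commute)
    also have "\<dots> \<le> ennreal C" using C[OF that] by (metis ennreal_of_nat_eq_real_of_nat ennreal_leI)
    finally show ?thesis .
  qed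
  then have "(\<integral>\<^sup>+\<omega>. (\<Sum>k\<in>I. indicator (E k) \<omega>) \<partial>M) \<le> ennreal C"
    using nn_integral_mono[of M _ "\<lambda>_. ennreal C"] by (simp add: emeasure_space_1)
  moreover have "0 \<le> p" using E(2) measure_nonneg by metis
  then have "(\<integral>\<^sup>+\<omega>. (\<Sum>k\<in>I. indicator (E k) \<omega>) \<partial>M) = ennreal (real (card I) * p)"
    using E by (simp add: nn_integral_sum emeasure_eq_measure ennreal_mult ennreal_of_nat_eq_real_of_nat)
  ultimately show ?thesis using \<open>0 \<le> C\<close> by (simp add: ennreal_le_iff)
qed

context
  fixes H :: "(real \<Rightarrow> real) set" and L :: "(real \<Rightarrow> real) \<Rightarrow> real \<Rightarrow> real \<Rightarrow> ereal"
    and M :: "'w measure" and X :: "'w \<Rightarrow> real \<Rightarrow> real" and T :: real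
  assumes psc: "periodic_shift_class H" and inv: "invariant_ILF H L"
    and psp: "periodic_stationary_process H M X" and Tpos: "0 < T"
begin

lemma loc_event_trace:
  assumes B: "B \<in> sets borel"
  obtains C where "C \<in> sets path_space" "\<And>g. g \<in> H \<Longrightarrow> loc L g 0 T \<in> B \<longleftrightarrow> g \<in> C"
proof -
  have "(\<lambda>g. L g 0 T) \<in> borel_measurable (H_space H)"
    using inv Tpos unfolding invariant_ILF_def intrinsic_location_functional_def by auto
  then have "(\<lambda>g. loc L g 0 T) \<in> borel_measurable (H_space H)" unfolding loc_def by measurable
  then have "(\<lambda>g. loc L g 0 T) -` B \<inter> space (H_space H) \<in> sets (H_space H)" using B by (rule measurable_sets)
  moreover have "space (H_space H) = H" unfolding H_space_def by (simp add: space_restrict_space)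
  ultimately have "(\<lambda>g. loc L g 0 T) -` B \<inter> H \<in> (\<inter>) H ` sets path_space"
    unfolding H_space_def by (simp add: sets_restrict_space)
  then obtain C where "C \<in> sets path_space" "(\<lambda>g. loc L g 0 T) -` B \<inter> H = H \<inter> C" by auto
  then show ?thesis using that by blast
qed

lemma loc_offset_event:
  assumes B: "B \<in> sets borel"
  shows "{\<omega> \<in> space M. loc L (X \<omega>) s (s + T) - s \<in> B} \<in> sets M"
    "emeasure M {\<omega> \<in> space M. loc L (X \<omega>) s (s + T) - s \<in> B} = emeasure M {\<omega> \<in> space M. loc L (X \<omega>) 0 T \<in> B}"
proof -
  define \<Psi> where "\<Psi> g = loc L g 0 T" for g
  obtain C where C: "C \<in> sets path_space" and CH: "\<And>g. g \<in> H \<Longrightarrow> (\<Psi> g \<in> B) = (g \<in> C)"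
    using loc_event_trace[OF B] unfolding \<Psi>_def by blast
  have sh: "shift s (X \<omega>) \<in> H" if "\<omega> \<in> space M" for \<omega>
    using psc periodic_stationary_process_path[OF psp that] unfolding periodic_shift_class_def by auto
  have e1: "{\<omega> \<in> space M. loc L (X \<omega>) s (s + T) - s \<in> B} = (\<lambda>\<omega>. shift s (X \<omega>)) -` C \<inter> space M"
  proof -
    have "loc L (X \<omega>) s (s + T) - s = \<Psi> (shift s (X \<omega>))" if "\<omega> \<in> space M" for \<omega>
      using loc_shift[OF inv psc periodic_stationary_process_path[OF psp that], of s "s + T" s] Tpos unfolding \<Psi>_def by simp
    then show ?thesis using CH sh by auto
  qed
  have e2: "{\<omega> \<in> space M. loc L (X \<omega>) 0 T \<in> B} = X -` C \<inter> space M"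
    using CH periodic_stationary_process_path[OF psp] unfolding \<Psi>_def by auto
  show "{\<omega> \<in> space M. loc L (X \<omega>) s (s + T) - s \<in> B} \<in> sets M"
    unfolding e1 using measurable_shift[OF periodic_stationary_process_measurable[OF psp]] C(1) by (rule measurable_sets)
  have "emeasure M ((\<lambda>\<omega>. shift s (X \<omega>)) -` C \<inter> space M) = emeasure (distr M path_space (\<lambda>\<omega>. shift s (X \<omega>))) C"
    using measurable_shift[OF periodic_stationary_process_measurable[OF psp]] C(1) by (simp add: emeasure_distr)
  also have "\<dots> = emeasure (distr M path_space X) C" by (simp add: periodic_stationary_process_stationary[OF psp])
  also have "\<dots> = emeasure M (X -` C \<inter> space M)" using periodic_stationary_process_measurable[OF psp] C(1) by (simp add: emeasure_distr)
  finally show "emeasure M {\<omega> \<in> space M. loc L (X \<omega>) s (s + T) - s \<in> B} = emeasure M {\<omega> \<in> space M. loc L (X \<omega>) 0 T \<in> B}"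
    using e1 e2 by simp
qed

text \<open>By stationarity each of the \<open>N\<close> grid windows is a hit with the same probability, while
  every path has few hits.\<close>

lemma measure_loc_cell_mult_le:
  assumes tpos: "0 < t" and hpos: "0 < h" and tT: "t + h < T" and T1: "T \<le> 1"
    and d: "0 < \<delta>" "\<delta> \<le> t" "\<delta> \<le> T - t - h" "1 - T \<le> real m * \<delta>" and N: "0 < N"
  shows "measure M {\<omega> \<in> space M. loc L (X \<omega>) 0 T \<in> {t..<t+h}} * of_int N \<le> (real m + 1) * (h * of_int N + 1)"
proof -
  interpret prob_space M by (rule periodic_stationary_process_prob_space[OF psp])
  define E where "E k = {\<omega> \<in> space M. loc L (X \<omega>) (of_int k / of_int N) (of_int k / of_int N + T) - of_int k / of_int N \<in> {t..<t+h}}" for k :: int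
  have "real (card {0..<N}) * measure M {\<omega> \<in> space M. loc L (X \<omega>) 0 T \<in> {t..<t+h}} \<le> (real m + 1) * (h * of_int N + 1)"
  proof (rule card_mult_prob_le_overlap)
    fix k
    show "E k \<in> events" unfolding E_def by (rule loc_offset_event) simp
    show "prob (E k) = measure M {\<omega> \<in> space M. loc L (X \<omega>) 0 T \<in> {t..<t+h}}"
      unfolding E_def measure_def by (subst loc_offset_event) simp_all
  next
    fix \<omega> assume \<omega>: "\<omega> \<in> space M"
    have "{k \<in> {0..<N}. \<omega> \<in> E k} = {k \<in> {0..<N}. window_hit L (X \<omega>) T t h (of_int k / of_int N)}"
      using \<omega> window_hit_def[OF psc inv periodic_stationary_process_path[OF psp \<omega>] tpos hpos tT T1] unfolding E_def by auto
    then show "real (card {k \<in> {0..<N}. \<omega> \<in> E k}) \<le> (real m + 1) * (h * of_int N + 1)"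
      using card_window_hits_le[OF psc inv periodic_stationary_process_path[OF psp \<omega>] tpos hpos tT T1 d N] by simp
  qed (use hpos N in auto)
  then show ?thesis using N by (simp add: mult.commute)
qed

lemma measure_loc_cell_le:
  assumes "0 < t" "0 < h" "t + h < T" "T \<le> 1"
    and "0 < \<delta>" "\<delta> \<le> t" "\<delta> \<le> T - t - h" "1 - T \<le> real m * \<delta>"
  shows "measure M {\<omega> \<in> space M. loc L (X \<omega>) 0 T \<in> {t..<t+h}} \<le> (real m + 1) * h"
proof -
  have "measure M {\<omega> \<in> space M. loc L (X \<omega>) 0 T \<in> {t..<t+h}} * real n \<le> (real m + 1) * h * real n + (real m + 1)"
    if "0 < n" for n :: nat
    using measure_loc_cell_mult_le[OF assms, of "int n"] that by (simp add: algebra_simps)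
  then show ?thesis by (rule le_of_mult_le_affine)
qed

end


lemma nn_integral_interval_lower_bound:
  fixes f :: "real \<Rightarrow> real"
  assumes "\<And>y. y \<in> {t..<t+h} \<Longrightarrow> c \<le> f y" "0 \<le> c" "0 \<le> h"
  shows "ennreal (c * h) \<le> (\<integral>\<^sup>+x\<in>{t..<t+h}. ennreal (f x) \<partial>lborel)"
proof -
  have "ennreal (c * h) = (\<integral>\<^sup>+x. ennreal c * indicator {t..<t+h} x \<partial>lborel)"
    using assms by (simp add: nn_integral_cmult_indicator ennreal_mult)
  also have "\<dots> \<le> (\<integral>\<^sup>+x\<in>{t..<t+h}. ennreal (f x) \<partial>lborel)"
    using assms(1) by (intro nn_integral_mono) (auto split: split_indicator intro: ennreal_leI)
  finally show ?thesis .
qed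

lemma cadlag_density_le_density_bound:
  assumes psc: "periodic_shift_class H" and inv: "invariant_ILF H L"
    and psp: "periodic_stationary_process H M X" and T: "0 < T" "T \<le> 1"
    and cd: "cadlag_density_on T M (\<lambda>\<omega>. L (X \<omega>) 0 T) f" and t: "t \<in> {0<..<T}"
  shows "f t \<le> density_bound T t"
proof (rule ccontr)
  interpret prob_space M by (rule periodic_stationary_process_prob_space[OF psp])
  assume "\<not> f t \<le> density_bound T t"
  define B0 where "B0 = (f t + density_bound T t) / 2"
  have B0: "density_bound T t < B0" "B0 < f t" using \<open>\<not> f t \<le> _\<close> unfolding B0_def by auto
  have "continuous (at_right t) f" using cd t unfolding cadlag_density_on_def by auto
  then have "eventually (\<lambda>x. B0 < f x) (at_right t)" using B0 by (simp add: continuous_within order_tendstoD)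
  then obtain b where b: "t < b" "\<And>y. t < y \<Longrightarrow> y < b \<Longrightarrow> B0 < f y"
    unfolding eventually_at_right_field by auto
  have t': "0 < t" "t < T" using t by auto
  obtain h0 where h0: "0 < h0" and cover: "\<And>h. 0 < h \<Longrightarrow> h < h0 \<Longrightarrow> t + h < T \<and> (\<exists>\<delta> m. 0 < \<delta> \<and> \<delta> \<le> t \<and>
        \<delta> \<le> T - t - h \<and> 1 - T \<le> real m * \<delta> \<and> real m + 1 \<le> density_bound T t)"
    using density_bound_cell_cover[OF t' T(2)] by blast
  define h where "h = min (b - t) h0 / 2"
  have h: "0 < h" "h < h0" "t + h < b" using b h0 by (auto simp: h_def min_def field_simps)
  then obtain \<delta> m where tT: "t + h < T" and d: "0 < \<delta>" "\<delta> \<le> t" "\<delta> \<le> T - t - h" "1 - T \<le> real m * \<delta>"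
    and m: "real m + 1 \<le> density_bound T t"
    using cover by blast
  define E where "E = {\<omega> \<in> space M. loc L (X \<omega>) 0 T \<in> {t..<t+h}}"
  have E_eq: "E = {\<omega> \<in> space M. L (X \<omega>) 0 T \<in> ereal ` {t..<t+h}}"
    unfolding E_def using invariant_ILF_loc(1)[OF inv periodic_stationary_process_path[OF psp] T(1)] by auto
  have "{t..<t+h} \<subseteq> {0<..<T}" using t' tT by auto
  then have density: "(\<integral>\<^sup>+x\<in>{t..<t+h}. ennreal (f x) \<partial>lborel) = emeasure M E"
    using cd unfolding E_eq cadlag_density_on_def by simp
  have "B0 \<le> f y" if "y \<in> {t..<t+h}" for y
    using that b(2)[of y] B0 h by (cases "y = t") auto
  moreover have "0 \<le> B0" using B0 m by linarith
  ultimately have "ennreal (B0 * h) \<le> (\<integral>\<^sup>+x\<in>{t..<t+h}. ennreal (f x) \<partial>lborel)"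
    using h by (intro nn_integral_interval_lower_bound) auto
  then have "ennreal (B0 * h) \<le> ennreal (measure M E)"
    unfolding density by (simp add: emeasure_eq_measure)
  then have "B0 * h \<le> measure M E"
    by (simp add: ennreal_le_iff2) (use measure_nonneg[of M E] in linarith)
  also have "\<dots> \<le> (real m + 1) * h"
    unfolding E_def using measure_loc_cell_le[OF psc inv psp T(1) _ h(1) tT T(2) d] t by simp
  also have "\<dots> \<le> density_bound T t * h" using m h by (simp add: mult_right_mono)
  finally show False using B0 h by simp
qed

section \<open>Location functionals selecting the top site\<close>

lemma borel_measurable_frac[measurable]: "(frac :: real \<Rightarrow> real) \<in> borel_measurable borel"
  unfolding frac_def by measurable

definition cosine_wave :: "real \<Rightarrow> real" where "cosine_wave x = cos (2 * pi * x)"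
definition cosine_shifts :: "(real \<Rightarrow> real) set" where "cosine_shifts = range (\<lambda>c. shift c cosine_wave)"
definition clip :: "real \<Rightarrow> real" where "clip y = max (-1) (min 1 y)"
text \<open>\<open>phase_of\<close> recovers \<open>frac c\<close> from \<open>shift c cosine_wave\<close> via its values at \<open>0\<close> and \<open>1/4\<close>;
  \<open>clip\<close> only serves to make it a measurable function of an arbitrary path.\<close>
definition phase_of :: "(real \<Rightarrow> real) \<Rightarrow> real" where
  "phase_of g = (if g (1/4) \<le> 0 then arccos (clip (g 0)) / (2 * pi) else 1 - arccos (clip (g 0)) / (2 * pi))"

lemma cos_sin_2pi_frac: "cos (2 * pi * frac c) = cos (2 * pi * c)" "sin (2 * pi * frac c) = sin (2 * pi * c)"
proof -
  have e: "2 * pi * c = 2 * pi * frac c + (2 * pi) * of_int \<lfloor>c\<rfloor>" by (simp add: frac_def algebra_simps)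
  show "cos (2 * pi * frac c) = cos (2 * pi * c)" unfolding e by (simp add: cos_add)
  show "sin (2 * pi * frac c) = sin (2 * pi * c)" unfolding e by (simp add: sin_add)
qed

lemma phase_of_shift: "phase_of (shift c cosine_wave) = frac c"
proof -
  define \<theta> where "\<theta> = 2 * pi * frac c"
  have th: "0 \<le> \<theta>" "\<theta> < 2 * pi" unfolding \<theta>_def by (simp_all add: frac_lt_1)
  have g00: "shift c cosine_wave 0 = cos \<theta>" unfolding \<theta>_def shift_def cosine_wave_def by (simp add: cos_sin_2pi_frac)
  have g14: "shift c cosine_wave (1/4) = - sin \<theta>"
  proof -
    have "shift c cosine_wave (1/4) = cos (2 * pi * c + pi / 2)" unfolding shift_def cosine_wave_def by (simp add: algebra_simps)
    also have "\<dots> = - sin (2 * pi * c)" by (simp add: cos_add)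
    finally show ?thesis unfolding \<theta>_def by (simp add: cos_sin_2pi_frac)
  qed
  have cl: "clip (cos \<theta>) = cos \<theta>" unfolding clip_def by simp
  show ?thesis
  proof (cases "\<theta> \<le> pi")
    case True
    then have "0 \<le> sin \<theta>" using th by (simp add: sin_ge_zero)
    then show ?thesis unfolding phase_of_def g00 g14 cl using arccos_cos[OF th(1) True] unfolding \<theta>_def by simp
  next
    case False
    then have "sin \<theta> < 0" using th by (simp add: sin_lt_zero)
    moreover have "arccos (cos \<theta>) = 2 * pi - \<theta>"
    proof -
      have "cos \<theta> = cos (2 * pi - \<theta>)" by (simp add: cos_diff)
      then show ?thesis using arccos_cos[of "2 * pi - \<theta>"] th False by simp
    qed
    ultimately show ?thesis unfolding phase_of_def g00 g14 cl unfolding \<theta>_def by (simp add: field_simps)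
  qed
qed

lemma continuous_on_arccos_clip: "continuous_on UNIV (\<lambda>y. arccos (clip y))"
proof -
  have "continuous_on UNIV clip" unfolding clip_def by (intro continuous_intros)
  moreover have "clip ` UNIV \<subseteq> {-1..1}" unfolding clip_def by auto
  ultimately show ?thesis using continuous_on_compose[of UNIV clip arccos] continuous_on_arccos'
    by (simp add: continuous_on_subset o_def)
qed

lemma phase_of_measurable: "phase_of \<in> borel_measurable path_space"
proof -
  have ac: "(\<lambda>y. arccos (clip y)) \<in> borel_measurable borel"
    using continuous_on_arccos_clip by (rule borel_measurable_continuous_onI)
  have e0: "(\<lambda>g. g 0) \<in> borel_measurable path_space" unfolding path_space_def by simp
  have e1: "(\<lambda>g. g (1/4)) \<in> borel_measurable path_space" unfolding path_space_def by simp
  have "(\<lambda>g. arccos (clip (g 0))) \<in> borel_measurable path_space"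
    using measurable_compose[OF e0 ac] by simp
  then show ?thesis unfolding phase_of_def using e1 by measurable
qed

lemma periodic_shift_class_cosine_shifts: "periodic_shift_class cosine_shifts"
  unfolding periodic_shift_class_def cosine_shifts_def
proof (intro conjI ballI allI)
  fix g x assume "g \<in> range (\<lambda>c. shift c cosine_wave)"
  then obtain c where g: "g = shift c cosine_wave" by auto
  have "2 * pi * (x + 1 + c) = 2 * pi * (x + c) + 2 * pi" by (simp add: algebra_simps)
  then show "g (x + 1) = g x" unfolding g shift_def cosine_wave_def by simp
next
  fix g c' assume "g \<in> range (\<lambda>c. shift c cosine_wave)"
  then obtain c where g: "g = shift c cosine_wave" by auto
  show "shift c' g \<in> range (\<lambda>c. shift c cosine_wave)" unfolding g shift_shift by auto
qed

text \<open>On a path of phase \<open>c\<close>, site \<open>j\<close> occurs at the points \<open>pos j - c + \<int>\<close>. On \<open>[a, b]\<close>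
  the functional picks the first occurrence of the visible site of highest level, and \<open>a\<close>
  if no site is visible, much like the location of the highest local maximum.\<close>

locale ranked_sites =
  fixes K :: nat and pos :: "nat \<Rightarrow> real" and level :: "nat \<Rightarrow> nat" and j0 :: nat
  assumes inj: "inj_on level {..<K}" and j0: "j0 < K" and top: "\<And>j. j < K \<Longrightarrow> level j \<le> level j0"
begin

definition wait where "wait c a j = frac (pos j - c - a)"
definition visible where "visible c a b j \<longleftrightarrow> a + wait c a j \<le> b"
definition is_top where "is_top c a b j \<longleftrightarrow> j < K \<and> visible c a b j \<and> (\<forall>j'\<in>{..<K}. visible c a b j' \<longrightarrow> level j' \<le> level j)"
definition top_loc where "top_loc c a b = a + (\<Sum>j<K. if is_top c a b j then wait c a j else 0)"
definition top_ILF where "top_ILF g a b = ereal (top_loc (phase_of g) a b)"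

lemma is_top_unique: assumes "is_top c a b j" "is_top c a b j'" shows "j = j'"
proof -
  have "level j' \<le> level j" "level j \<le> level j'" "j < K" "j' < K" using assms unfolding is_top_def by auto
  then show ?thesis using inj unfolding inj_on_def by (metis antisym lessThan_iff)
qed

lemma top_loc_eq: assumes "is_top c a b j" shows "top_loc c a b = a + wait c a j"
proof -
  have jK: "j < K" using assms unfolding is_top_def by simp
  have "(\<Sum>j'<K. if is_top c a b j' then wait c a j' else 0) = (\<Sum>j'<K. if j' = j then wait c a j else 0)"
  proof (rule sum.cong)
    fix j' assume "j' \<in> {..<K}"
    show "(if is_top c a b j' then wait c a j' else 0) = (if j' = j then wait c a j else 0)"
    proof (cases "j' = j")
      case True then show ?thesis using assms by simp
    next
      case False then show ?thesis using is_top_unique[OF assms, of j'] by auto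
    qed
  qed simp
  also have "\<dots> = wait c a j" using jK by simp
  finally show ?thesis unfolding top_loc_def by simp
qed

lemma top_loc_no_top: assumes "\<And>j. \<not> is_top c a b j" shows "top_loc c a b = a"
  unfolding top_loc_def using assms by simp

lemma visible_imp_ex_top: assumes "j < K" "visible c a b j" shows "\<exists>j. is_top c a b j"
proof -
  define S where "S = {j \<in> {..<K}. visible c a b j}"
  have S: "finite S" "S \<noteq> {}" using assms unfolding S_def by auto
  have "Max (level ` S) \<in> level ` S" using S by simp
  then obtain jm where jm: "jm \<in> S" "level jm = Max (level ` S)" by auto
  have "is_top c a b jm" unfolding is_top_def
  proof (intro conjI ballI impI)
    show "jm < K" "visible c a b jm" using jm(1) unfolding S_def by auto
    fix j' assume "j' \<in> {..<K}" "visible c a b j'"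
    then have "j' \<in> S" unfolding S_def by simp
    then show "level j' \<le> level jm" unfolding jm(2) using S by simp
  qed
  then show ?thesis by blast
qed

lemma first_visit_eq_floor: "a + wait c a j = pos j - c - of_int \<lfloor>pos j - c - a\<rfloor>"
  unfolding wait_def frac_def by simp

lemma wait_bounds: "0 \<le> wait c a j" "wait c a j < 1" unfolding wait_def by (simp_all add: frac_lt_1)

lemma first_visit_le:
  assumes "a \<le> x" "x = pos j - c + of_int k"
  shows "a + wait c a j \<le> x"
proof -
  have "of_int (- k) \<le> pos j - c - a" using assms by simp
  then have "- k \<le> \<lfloor>pos j - c - a\<rfloor>" by (simp add: le_floor_iff)
  then have "- real_of_int \<lfloor>pos j - c - a\<rfloor> \<le> of_int k" by linarith
  then show ?thesis unfolding first_visit_eq_floor using assms by simp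
qed

lemma first_visit_mono: assumes "a1 \<le> a2" shows "a1 + wait c a1 j \<le> a2 + wait c a2 j"
proof (rule first_visit_le)
  show "a1 \<le> a2 + wait c a2 j" using assms wait_bounds[of c a2 j] by simp
  show "a2 + wait c a2 j = pos j - c + of_int (- \<lfloor>pos j - c - a2\<rfloor>)" unfolding first_visit_eq_floor by simp
qed

lemma first_visit_stable:
  assumes "a1 \<le> a2" "a2 \<le> a1 + wait c a1 j"
  shows "a2 + wait c a2 j = a1 + wait c a1 j"
proof -
  have "a2 + wait c a2 j \<le> a1 + wait c a1 j"
    by (rule first_visit_le[where k="- \<lfloor>pos j - c - a1\<rfloor>"]) (use assms in \<open>auto simp: first_visit_eq_floor\<close>)
  then show ?thesis using first_visit_mono[OF assms(1), of c j] by simp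
qed

lemma top_loc_bounds: assumes "a < b" shows "a \<le> top_loc c a b" "top_loc c a b \<le> b"
proof -
  have "a \<le> top_loc c a b \<and> top_loc c a b \<le> b"
  proof (cases "\<exists>j. is_top c a b j")
    case True
    then obtain j where "is_top c a b j" by auto
    then show ?thesis using top_loc_eq wait_bounds[of c a j] unfolding is_top_def visible_def by auto
  next
    case False then show ?thesis using top_loc_no_top assms by auto
  qed
  then show "a \<le> top_loc c a b" "top_loc c a b \<le> b" by auto
qed

lemma visible_mono: "a1 \<le> a2 \<Longrightarrow> b2 \<le> b1 \<Longrightarrow> visible c a2 b2 j \<Longrightarrow> visible c a1 b1 j"
  unfolding visible_def using first_visit_mono[of a1 a2 c j] by linarith

lemma top_loc_subinterval:
  assumes "a1 \<le> a2" "b2 \<le> b1" "a2 \<le> top_loc c a1 b1" "top_loc c a1 b1 \<le> b2"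
  shows "top_loc c a2 b2 = top_loc c a1 b1"
proof (cases "\<exists>j. is_top c a1 b1 j")
  case True
  then obtain j where j: "is_top c a1 b1 j" by auto
  have L1: "top_loc c a1 b1 = a1 + wait c a1 j" by (rule top_loc_eq[OF j])
  have fx: "a2 + wait c a2 j = a1 + wait c a1 j" using first_visit_stable[OF assms(1)] assms(3) L1 by simp
  have "is_top c a2 b2 j" unfolding is_top_def
  proof (intro conjI ballI impI)
    show "j < K" using j unfolding is_top_def by simp
    show "visible c a2 b2 j" unfolding visible_def using fx assms(4) L1 by simp
    fix j' assume "j' \<in> {..<K}" "visible c a2 b2 j'"
    then show "level j' \<le> level j" using visible_mono[OF assms(1,2)] j unfolding is_top_def by blast
  qed
  then show ?thesis using top_loc_eq fx L1 by simp
next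
  case False
  then have L1: "top_loc c a1 b1 = a1" by (simp add: top_loc_no_top)
  then have a: "a2 = a1" using assms by simp
  have "\<not> is_top c a2 b2 j" for j
  proof
    assume "is_top c a2 b2 j"
    then have "j < K" "visible c a1 b1 j" using visible_mono[OF assms(1,2)] unfolding is_top_def by auto
    then show False using visible_imp_ex_top False by blast
  qed
  then show ?thesis using L1 a by (simp add: top_loc_no_top)
qed

lemma wait_shift: "wait (c + d) (a - d) j = wait c a j" unfolding wait_def by (simp add: algebra_simps)

lemma top_loc_shift: "top_loc (c + d) (a - d) (b - d) = top_loc c a b - d"
proof -
  have p: "visible (c + d) (a - d) (b - d) j = visible c a b j" for j unfolding visible_def wait_shift by simp
  have i: "is_top (c + d) (a - d) (b - d) j = is_top c a b j" for j unfolding is_top_def p by simp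
  show ?thesis unfolding top_loc_def i wait_shift by simp
qed

lemma wait_frac: "wait (frac c) a j = wait c a j"
proof -
  have e: "pos j - frac c - a = (pos j - c - a) + of_int \<lfloor>c\<rfloor>" by (simp add: frac_def)
  show ?thesis unfolding wait_def e by (simp only: frac_add_of_int_right)
qed

lemma top_loc_frac: "top_loc (frac c) a b = top_loc c a b"
  unfolding top_loc_def is_top_def visible_def wait_frac by simp

lemma frac_top_loc_unit_window: "frac (top_loc c a (a + 1)) = frac (pos j0 - c)"
proof -
  have "is_top c a (a + 1) j0" unfolding is_top_def visible_def using j0 top wait_bounds[of c a j0] by auto
  then have "top_loc c a (a + 1) = pos j0 - c + of_int (- \<lfloor>pos j0 - c - a\<rfloor>)" using top_loc_eq first_visit_eq_floor by simp
  then show ?thesis by (simp only: frac_add_of_int_right)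
qed

lemma visible_measurable[measurable]: "Measurable.pred borel (\<lambda>c. visible c a b j)"
  unfolding visible_def wait_def by measurable

lemma is_top_measurable[measurable]: "Measurable.pred borel (\<lambda>c. is_top c a b j)"
proof -
  have "Measurable.pred borel (\<lambda>c. \<forall>j'\<in>{..<K}. visible c a b j' \<longrightarrow> level j' \<le> level j)"
    by (intro pred_intros_finite) auto
  then show ?thesis unfolding is_top_def by simp
qed

lemma wait_measurable[measurable]: "(\<lambda>c. wait c a j) \<in> borel_measurable borel"
  unfolding wait_def by measurable

lemma top_loc_measurable: "(\<lambda>c. top_loc c a b) \<in> borel_measurable borel"
proof -
  have "(\<lambda>c. if is_top c a b j then wait c a j else 0) \<in> borel_measurable borel" for j
    by measurable
  then show ?thesis unfolding top_loc_def by (intro borel_measurable_add borel_measurable_sum) auto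
qed

lemma top_ILF_shift: "top_ILF (shift c cosine_wave) a b = ereal (top_loc c a b)"
  unfolding top_ILF_def phase_of_shift top_loc_frac by simp

lemma invariant_ILF_top_ILF: "invariant_ILF cosine_shifts top_ILF"
proof -
  have Hg: "g \<in> cosine_shifts \<Longrightarrow> \<exists>c. g = shift c cosine_wave" for g unfolding cosine_shifts_def by auto
  have meas: "(\<lambda>g. top_ILF g a b) \<in> borel_measurable (H_space cosine_shifts)" for a b
  proof -
    have "(\<lambda>g. top_ILF g a b) \<in> borel_measurable path_space"
      unfolding top_ILF_def using measurable_compose[OF phase_of_measurable top_loc_measurable] by simp
    then show ?thesis unfolding H_space_def by (rule measurable_restrict_space1)
  qed
  show ?thesis unfolding invariant_ILF_def intrinsic_location_functional_def
  proof (intro conjI allI impI ballI)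
    fix a b :: real assume "a < b"
    show "(\<lambda>g. top_ILF g a b) \<in> borel_measurable (H_space cosine_shifts)" by (rule meas)
  next
    fix g and a b :: real assume g: "g \<in> cosine_shifts" and ab: "a < b"
    obtain c where c: "g = shift c cosine_wave" using Hg[OF g] by auto
    show "top_ILF g a b \<in> ereal ` {a..b} \<union> {\<infinity>}" unfolding c top_ILF_shift using top_loc_bounds[OF ab, of c] by auto
  next
    fix g and a b d :: real assume g: "g \<in> cosine_shifts" and ab: "a < b"
    obtain c where c: "g = shift c cosine_wave" using Hg[OF g] by auto
    show "top_ILF g a b = top_ILF (shift d g) (a - d) (b - d) + ereal d"
      unfolding c shift_shift top_ILF_shift top_loc_shift by simp
  next
    fix g and a1 b1 a2 b2 :: real
    assume g: "g \<in> cosine_shifts" and ab: "a1 < b1 \<and> a2 < b2 \<and> a1 \<le> a2 \<and> b2 \<le> b1" and l: "top_ILF g a1 b1 \<in> ereal ` {a2..b2}"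
    obtain c where c: "g = shift c cosine_wave" using Hg[OF g] by auto
    show "top_ILF g a2 b2 = top_ILF g a1 b1" using l ab unfolding c top_ILF_shift by (auto intro: top_loc_subinterval)
  next
    fix g and a1 b1 a2 b2 :: real assume "g \<in> cosine_shifts"
    show "top_ILF g a1 b1 \<noteq> \<infinity>" unfolding top_ILF_def by simp
  next
    fix g and a b :: real assume "g \<in> cosine_shifts" "a < b"
    show "top_ILF g a b \<noteq> \<infinity>" unfolding top_ILF_def by simp
  next
    fix g and a :: real assume g: "g \<in> cosine_shifts"
    obtain c where c: "g = shift c cosine_wave" using Hg[OF g] by auto
    show "frac (real_of_ereal (top_ILF g 0 1)) = frac (real_of_ereal (top_ILF g a (a + 1)))"
      unfolding c top_ILF_shift using frac_top_loc_unit_window[of c 0] frac_top_loc_unit_window[of c a] by simp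
  qed
qed

end

section \<open>A cosine wave with uniform random phase\<close>

lemma emeasure_lborel_translate:
  fixes c :: real
  assumes "S \<in> sets borel"
  shows "emeasure lborel ((\<lambda>x. x + c) -` S) = emeasure lborel S"
proof -
  have "emeasure lborel S = emeasure (distr lborel borel ((+) c)) S" by (simp add: lborel_distr_plus)
  also have "\<dots> = emeasure lborel ((+) c -` S)" using assms by (simp add: emeasure_distr)
  also have "(+) c -` S = (\<lambda>x. x + c) -` S" by (auto simp: add.commute)
  finally show ?thesis by simp
qed

lemma emeasure_lborel_reflect:
  fixes p :: real
  assumes "S \<in> sets borel"
  shows "emeasure lborel ((\<lambda>x. p - x) -` S) = emeasure lborel S"
proof -
  have "(\<integral>\<^sup>+x. indicator S x \<partial>lborel) = (\<integral>\<^sup>+x. indicator S (p + (-1) * x) \<partial>lborel)"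
    using nn_integral_real_affine[of "indicator S" "-1" p] assms by simp
  also have "(\<lambda>x. indicator S (p + (-1) * x) :: ennreal) = indicator ((\<lambda>x. p - x) -` S)"
    by (auto simp: indicator_def)
  finally have e: "(\<integral>\<^sup>+x. indicator S x \<partial>lborel) = (\<integral>\<^sup>+x. indicator ((\<lambda>x. p - x) -` S) x \<partial>lborel)" .
  have "(\<lambda>x. p - x) -` S \<in> sets borel"
    using measurable_sets[of "\<lambda>x::real. p - x" borel borel S] assms by simp
  then show ?thesis using e assms by simp
qed

lemma emeasure_lborel_periodic_window:
  fixes W :: "real set"
  assumes W: "W \<in> sets borel" and per: "\<And>u. (u + 1 \<in> W) = (u \<in> W)"
  shows "emeasure lborel ({a..<a+1} \<inter> W) = emeasure lborel ({0..<1} \<inter> W)"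
proof -
  have shiftk: "emeasure lborel ({b + of_int k..<b + of_int k + 1} \<inter> W) = emeasure lborel ({b..<b+1} \<inter> W)" for b k
  proof -
    have "(\<lambda>x. x + of_int k) -` ({b + of_int k..<b + of_int k + 1} \<inter> W) = {b..<b+1} \<inter> W"
      using periodic_add_of_int[of "\<lambda>u. u \<in> W"] per by auto
    then show ?thesis using emeasure_lborel_translate[of "{b + of_int k..<b + of_int k + 1} \<inter> W" "of_int k"] W by simp
  qed
  have frac_case: "emeasure lborel ({r..<r+1} \<inter> W) = emeasure lborel ({0..<1} \<inter> W)" if r: "0 \<le> r" "r < 1" for r
  proof -
    have "emeasure lborel ({r..<r+1} \<inter> W) = emeasure lborel ({r..<1} \<inter> W) + emeasure lborel ({1..<1+r} \<inter> W)"
    proof -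
      have "{r..<r+1} \<inter> W = ({r..<1} \<inter> W) \<union> ({1..<1+r} \<inter> W)" using r by auto
      moreover have "({r..<1} \<inter> W) \<inter> ({1..<1+r} \<inter> W) = {}" by auto
      ultimately show ?thesis using W plus_emeasure[of "{r..<1} \<inter> W" lborel "{1..<1+r} \<inter> W"] by simp
    qed
    also have "emeasure lborel ({1..<1+r} \<inter> W) = emeasure lborel ({0..<r} \<inter> W)"
    proof -
      have "(\<lambda>x. x + 1) -` ({1..<1+r} \<inter> W) = {0..<r} \<inter> W" using per by auto
      then show ?thesis using emeasure_lborel_translate[of "{1..<1+r} \<inter> W" 1] W by simp
    qed
    also have "emeasure lborel ({r..<1} \<inter> W) + emeasure lborel ({0..<r} \<inter> W) = emeasure lborel ({0..<1} \<inter> W)"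
    proof -
      have "{0..<1} \<inter> W = ({r..<1} \<inter> W) \<union> ({0..<r} \<inter> W)" using r by auto
      moreover have "({r..<1} \<inter> W) \<inter> ({0..<r} \<inter> W) = {}" by auto
      ultimately show ?thesis using W plus_emeasure[of "{r..<1} \<inter> W" lborel "{0..<r} \<inter> W"] by simp
    qed
    finally show ?thesis .
  qed
  have "a = frac a + of_int \<lfloor>a\<rfloor>" by (simp add: frac_def)
  then have "emeasure lborel ({a..<a+1} \<inter> W) = emeasure lborel ({frac a + of_int \<lfloor>a\<rfloor>..<frac a + of_int \<lfloor>a\<rfloor> + 1} \<inter> W)"
    by simp
  also have "\<dots> = emeasure lborel ({frac a..<frac a + 1} \<inter> W)" by (rule shiftk)
  also have "\<dots> = emeasure lborel ({0..<1} \<inter> W)" by (rule frac_case) (simp_all add: frac_lt_1)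
  finally show ?thesis .
qed

text \<open>The sample space consists of the constant paths at a uniform level \<open>u \<in> [0, 1)\<close>, and
  \<open>random_cosine\<close> shifts the cosine wave by that level.\<close>

definition unit_uniform :: "real measure" where "unit_uniform = uniform_measure lborel {0..<1}"
definition const_path :: "real \<Rightarrow> real \<Rightarrow> real" where "const_path u = (\<lambda>_. u)"
definition random_phase_space :: "(real \<Rightarrow> real) measure" where "random_phase_space = distr unit_uniform path_space const_path"
definition random_cosine :: "(real \<Rightarrow> real) \<Rightarrow> real \<Rightarrow> real" where "random_cosine \<omega> = shift (\<omega> 0) cosine_wave"

lemma prob_space_unit_uniform: "prob_space unit_uniform" unfolding unit_uniform_def by (rule prob_space_uniform_measure) auto
lemma space_unit_uniform[simp]: "space unit_uniform = UNIV" and sets_unit_uniform[simp]: "sets unit_uniform = sets borel" unfolding unit_uniform_def by auto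
lemma emeasure_unit_uniform: "S \<in> sets borel \<Longrightarrow> emeasure unit_uniform S = emeasure lborel ({0..<1} \<inter> S)"
  unfolding unit_uniform_def by (simp add: divide_ennreal_def)

lemma measurable_unit_uniform: "f \<in> measurable borel N \<Longrightarrow> f \<in> measurable unit_uniform N"
  using measurable_cong_sets[OF sets_unit_uniform refl, of N] by simp

lemma const_path_measurable: "const_path \<in> measurable borel path_space"
  unfolding const_path_def path_space_def by (rule measurable_PiM_single') auto

lemma shift_cosine_wave_measurable: "(\<lambda>u. shift u cosine_wave) \<in> measurable borel path_space"
  unfolding shift_def cosine_wave_def path_space_def by (rule measurable_PiM_single') auto

lemma emeasure_unit_uniform_translate_periodic:
  assumes W: "W \<in> sets borel" and per: "\<And>u. (u + 1 \<in> W) = (u \<in> W)"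
  shows "emeasure unit_uniform ((\<lambda>x. x + c) -` W) = emeasure unit_uniform W"
proof -
  have "(\<lambda>x. x + c) -` W \<in> sets borel"
    using measurable_sets[of "\<lambda>x::real. x + c" borel borel W] W by simp
  moreover have "{0..<1} \<inter> (\<lambda>x. x + c) -` W = (\<lambda>x. x + c) -` ({c..<c+1} \<inter> W)" by auto
  ultimately have "emeasure unit_uniform ((\<lambda>x. x + c) -` W) = emeasure lborel ((\<lambda>x. x + c) -` ({c..<c+1} \<inter> W))"
    by (simp only: emeasure_unit_uniform)
  also have "\<dots> = emeasure lborel ({c..<c+1} \<inter> W)" using W by (intro emeasure_lborel_translate) auto
  also have "\<dots> = emeasure lborel ({0..<1} \<inter> W)" by (rule emeasure_lborel_periodic_window[OF W per])
  also have "\<dots> = emeasure unit_uniform W" using W by (simp add: emeasure_unit_uniform)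
  finally show ?thesis .
qed

lemma random_cosine_measurable: "random_cosine \<in> measurable path_space path_space"
proof -
  have "(\<lambda>\<omega> x. cos (2 * pi * (x + \<omega> 0))) \<in> measurable path_space path_space"
    unfolding path_space_def
  proof (rule measurable_PiM_single')
    fix i :: real
    have "(\<lambda>\<omega>. \<omega> 0) \<in> borel_measurable (Pi\<^sub>M UNIV (\<lambda>_. borel))" by simp
    then show "(\<lambda>\<omega>. cos (2 * pi * (i + \<omega> (0::real)))) \<in> borel_measurable (Pi\<^sub>M UNIV (\<lambda>_. borel))"
      by measurable
  qed simp
  then show ?thesis unfolding random_cosine_def shift_def cosine_wave_def by simp
qed

lemma shift_cosine_wave_periodic: "shift (u + 1) cosine_wave = shift u cosine_wave"
proof
  fix x
  have "2 * pi * (x + (u + 1)) = 2 * pi * (x + u) + 2 * pi" by (simp add: algebra_simps)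
  then show "shift (u + 1) cosine_wave x = shift u cosine_wave x" unfolding shift_def cosine_wave_def by simp
qed

lemma random_cosine_stationary:
  "distr random_phase_space path_space (\<lambda>\<omega>. shift c (random_cosine \<omega>)) = distr random_phase_space path_space random_cosine"
proof -
  have cp: "const_path \<in> measurable unit_uniform path_space"
    using const_path_measurable by (rule measurable_unit_uniform)
  have sw: "(\<lambda>u. shift u cosine_wave) \<in> measurable unit_uniform path_space"
    using shift_cosine_wave_measurable by (rule measurable_unit_uniform)
  have sc: "(\<lambda>\<omega>. shift c (random_cosine \<omega>)) \<in> measurable path_space path_space"
    by (rule measurable_shift[OF random_cosine_measurable])
  have "distr random_phase_space path_space (\<lambda>\<omega>. shift c (random_cosine \<omega>))
      = distr unit_uniform path_space ((\<lambda>u. shift u cosine_wave) \<circ> (\<lambda>x. x + c))"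
    unfolding random_phase_space_def using sc cp
    by (simp add: distr_distr comp_def random_cosine_def const_path_def shift_shift add.commute)
  also have "\<dots> = distr unit_uniform path_space (\<lambda>u. shift u cosine_wave)"
  proof (rule measure_eqI)
    fix A assume "A \<in> sets (distr unit_uniform path_space ((\<lambda>u. shift u cosine_wave) \<circ> (\<lambda>x. x + c)))"
    then have A: "A \<in> sets path_space" by simp
    define W where "W = (\<lambda>u. shift u cosine_wave) -` A"
    have W: "W \<in> sets borel" unfolding W_def using measurable_sets[OF shift_cosine_wave_measurable A] by simp
    have per: "(u + 1 \<in> W) = (u \<in> W)" for u unfolding W_def by (simp add: shift_cosine_wave_periodic)
    have "(\<lambda>u. shift u cosine_wave) \<circ> (\<lambda>x. x + c) \<in> measurable unit_uniform path_space"
      by (intro measurable_comp[OF _ sw]) (simp add: measurable_cong_sets[OF sets_unit_uniform sets_unit_uniform])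
    then show "emeasure (distr unit_uniform path_space ((\<lambda>u. shift u cosine_wave) \<circ> (\<lambda>x. x + c))) A
        = emeasure (distr unit_uniform path_space (\<lambda>u. shift u cosine_wave)) A"
      using emeasure_unit_uniform_translate_periodic[OF W per, of c] A sw
      by (simp add: emeasure_distr W_def vimage_comp)
  qed simp
  also have "\<dots> = distr random_phase_space path_space random_cosine"
    unfolding random_phase_space_def using random_cosine_measurable cp
    by (simp add: distr_distr comp_def random_cosine_def const_path_def)
  finally show ?thesis .
qed

lemma periodic_stationary_process_random_cosine: "periodic_stationary_process cosine_shifts random_phase_space random_cosine"
proof -
  have em: "const_path \<in> measurable unit_uniform path_space" using const_path_measurable by (rule measurable_unit_uniform)
  have p: "prob_space random_phase_space" unfolding random_phase_space_def
    by (rule prob_space.prob_space_distr[OF prob_space_unit_uniform em])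
  have m: "random_cosine \<in> measurable random_phase_space path_space" using random_cosine_measurable measurable_cong_sets[of random_phase_space path_space path_space path_space] unfolding random_phase_space_def by simp
  have h: "random_cosine \<omega> \<in> cosine_shifts" for \<omega> unfolding random_cosine_def cosine_shifts_def by auto
  have c: "continuous_on UNIV (random_cosine \<omega>)" for \<omega> unfolding random_cosine_def shift_def cosine_wave_def by (intro continuous_intros)
  show ?thesis unfolding periodic_stationary_process_def
  proof (intro conjI)
    show "\<forall>\<omega>\<in>space random_phase_space. random_cosine \<omega> \<in> cosine_shifts \<and> continuous_on UNIV (random_cosine \<omega>)" using h c by blast
    show "\<forall>c. distr random_phase_space path_space (\<lambda>\<omega>. shift c (random_cosine \<omega>)) = distr random_phase_space path_space random_cosine" using random_cosine_stationary by blast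
  qed (rule p, rule m)
qed

section \<open>Law of the top-site location\<close>

context ranked_sites begin

text \<open>\<open>counts T y j\<close>: in the window of length \<open>T\<close> in which site \<open>j\<close> occurs at offset \<open>y\<close>,
  no higher site occurs; then \<open>j\<close> is the top of that window.\<close>

definition counts where "counts T y j \<longleftrightarrow> (\<forall>j'\<in>{..<K}. level j < level j' \<longrightarrow> T \<le> frac (pos j' - pos j + y))"
definition top_density where "top_density T y = (\<Sum>j<K. if counts T y j then 1 else (0::real))"

lemma wait_periodic: "wait (u + 1) a j = wait u a j"
proof -
  have "pos j - (u + 1) - a = (pos j - u - a) + of_int (-1)" by simp
  then show ?thesis unfolding wait_def by (simp only: frac_add_of_int_right)
qed

lemma is_top_periodic: "is_top (u + 1) a b j = is_top u a b j"
  unfolding is_top_def visible_def wait_periodic by simp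

lemma wait_reflect: "wait (pos j - y) 0 j' = frac (pos j' - pos j + y)"
  unfolding wait_def by (simp add: algebra_simps)

lemma wait_self: "wait (pos j - y) 0 j = frac y"
  unfolding wait_def by simp

lemma is_top_reflect_iff:
  assumes y: "0 < y" "y \<le> T" "T < 1" and nz: "\<And>j'. j' < K \<Longrightarrow> frac (pos j' - pos j + y) \<noteq> T" and jK: "j < K"
  shows "is_top (pos j - y) 0 T j = counts T y j"
proof -
  have pj: "visible (pos j - y) 0 T j" unfolding visible_def wait_reflect using y by simp
  have "is_top (pos j - y) 0 T j \<longleftrightarrow> (\<forall>j'\<in>{..<K}. frac (pos j' - pos j + y) \<le> T \<longrightarrow> level j' \<le> level j)"
    unfolding is_top_def using pj jK by (simp add: visible_def wait_reflect)
  also have "\<dots> \<longleftrightarrow> counts T y j" unfolding counts_def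
  proof (rule ball_cong[OF refl])
    fix j' assume "j' \<in> {..<K}"
    then have ne: "frac (pos j' - pos j + y) \<noteq> T" using nz by simp
    show "(frac (pos j' - pos j + y) \<le> T \<longrightarrow> level j' \<le> level j) = (level j < level j' \<longrightarrow> T \<le> frac (pos j' - pos j + y))"
    proof (cases "level j < level j'")
      case True then show ?thesis using ne by auto
    next
      case False then show ?thesis by auto
    qed
  qed
  finally show ?thesis .
qed

lemma emeasure_top_ILF_event:
  assumes A: "A \<in> sets borel"
  shows "emeasure random_phase_space {\<omega> \<in> space random_phase_space. top_ILF (random_cosine \<omega>) 0 T \<in> ereal ` A}
    = emeasure lborel ({0..<1} \<inter> {u. top_loc u 0 T \<in> A})"
proof -
  have Lfm: "(\<lambda>\<omega>::real\<Rightarrow>real. top_loc (\<omega> 0) 0 T) \<in> borel_measurable path_space"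
  proof -
    have "(\<lambda>\<omega>::real\<Rightarrow>real. \<omega> 0) \<in> borel_measurable path_space" unfolding path_space_def by simp
    then show ?thesis using measurable_compose[OF _ top_loc_measurable] by blast
  qed
  define Q where "Q = {\<omega>::real\<Rightarrow>real. top_loc (\<omega> 0) 0 T \<in> A}"
  have "Q = (\<lambda>\<omega>::real\<Rightarrow>real. top_loc (\<omega> 0) 0 T) -` A \<inter> space path_space" unfolding Q_def by auto
  then have Qs: "Q \<in> sets path_space" using measurable_sets[OF Lfm A(1)] by simp
  have e1: "{\<omega> \<in> space random_phase_space. top_ILF (random_cosine \<omega>) 0 T \<in> ereal ` A} = Q"
    unfolding Q_def random_phase_space_def random_cosine_def top_ILF_shift by auto
  define V where "V = {u. top_loc u 0 T \<in> A}"
  have "V = (\<lambda>u. top_loc u 0 T) -` A \<inter> space borel" unfolding V_def by auto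
  then have Vs: "V \<in> sets borel" using measurable_sets[OF top_loc_measurable A(1)] by simp
  have "emeasure random_phase_space Q = emeasure unit_uniform (const_path -` Q \<inter> space unit_uniform)"
    unfolding random_phase_space_def by (rule emeasure_distr[OF measurable_unit_uniform[OF const_path_measurable] Qs])
  also have "const_path -` Q \<inter> space unit_uniform = V" unfolding V_def Q_def const_path_def by auto
  also have "emeasure unit_uniform V = emeasure lborel ({0..<1} \<inter> V)" by (rule emeasure_unit_uniform[OF Vs])
  finally show ?thesis using e1 unfolding V_def by simp
qed

lemma emeasure_top_loc_event_sum:
  assumes A: "A \<in> sets borel" "0 \<notin> A"
  shows "emeasure lborel ({0..<1} \<inter> {u. top_loc u 0 T \<in> A})
    = (\<Sum>j<K. emeasure lborel ({0..<1} \<inter> {u. is_top u 0 T j \<and> wait u 0 j \<in> A}))"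
proof -
  define V where "V = {u. top_loc u 0 T \<in> A}"
  define W where "W j = {u. is_top u 0 T j \<and> wait u 0 j \<in> A}" for j
  have Ws: "W j \<in> sets borel" for j unfolding W_def using A(1) by measurable
  have VW: "V = (\<Union>j\<in>{..<K}. W j)"
  proof (intro set_eqI iffI)
    fix u assume u: "u \<in> V"
    show "u \<in> (\<Union>j\<in>{..<K}. W j)"
    proof (cases "\<exists>j. is_top u 0 T j")
      case True
      then obtain j where j: "is_top u 0 T j" by auto
      then have "j < K" unfolding is_top_def by simp
      moreover have "u \<in> W j" using u j top_loc_eq[OF j] unfolding V_def W_def by simp
      ultimately show ?thesis by blast
    next
      case False
      then have "top_loc u 0 T = 0" using top_loc_no_top by simp
      then show ?thesis using u A(2) unfolding V_def by auto
    qed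
  next
    fix u assume "u \<in> (\<Union>j\<in>{..<K}. W j)"
    then obtain j where "is_top u 0 T j" "wait u 0 j \<in> A" unfolding W_def by auto
    then show "u \<in> V" using top_loc_eq unfolding V_def by simp
  qed
  have "{0..<1} \<inter> V = (\<Union>j\<in>{..<K}. {0..<1} \<inter> W j)" unfolding VW by auto
  moreover have "disjoint_family_on (\<lambda>j. {0..<1} \<inter> W j) {..<K}"
    unfolding disjoint_family_on_def W_def using is_top_unique by blast
  ultimately have "emeasure lborel ({0..<1} \<inter> V) = (\<Sum>j<K. emeasure lborel ({0..<1} \<inter> W j))"
    using Ws by (simp add: sum_emeasure image_subset_iff)
  then show ?thesis unfolding V_def W_def .
qed

text \<open>The reflection \<open>y = pos j - u\<close> turns the phase \<open>u\<close> into the offset of site \<open>j\<close>.\<close>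

lemma emeasure_top_visit_reflect:
  assumes A: "A \<in> sets borel" "A \<subseteq> {0<..<1}"
  shows "emeasure lborel ({0..<1} \<inter> {u. is_top u 0 T j \<and> wait u 0 j \<in> A})
    = emeasure lborel (A \<inter> {y. is_top (pos j - y) 0 T j})"
proof -
  define W where "W = {u. is_top u 0 T j \<and> wait u 0 j \<in> A}"
  have Ws: "W \<in> sets borel" unfolding W_def using A(1) by measurable
  have Wper: "(u + 1 \<in> W) = (u \<in> W)" for u
    using is_top_periodic[of u 0 T j] wait_periodic[of u 0 j] by (simp add: W_def)
  have "emeasure lborel ({0..<1} \<inter> W) = emeasure lborel ({pos j - 1..<pos j - 1 + 1} \<inter> W)"
    by (rule emeasure_lborel_periodic_window[OF Ws Wper, symmetric])
  also have "\<dots> = emeasure lborel ((\<lambda>y. pos j - y) -` ({pos j - 1..<pos j - 1 + 1} \<inter> W))"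
    by (rule emeasure_lborel_reflect[symmetric]) (use Ws in simp)
  also have "(\<lambda>y. pos j - y) -` ({pos j - 1..<pos j - 1 + 1} \<inter> W) = A \<inter> {y. is_top (pos j - y) 0 T j}"
  proof (intro set_eqI iffI)
    fix y assume "y \<in> (\<lambda>y. pos j - y) -` ({pos j - 1..<pos j - 1 + 1} \<inter> W)"
    then have y: "0 < y" "y \<le> 1" "is_top (pos j - y) 0 T j" "frac y \<in> A"
      by (auto simp: W_def wait_self)
    have "y \<noteq> 1" using y(4) A(2) by auto
    then have "frac y = y" using y by (simp add: frac_eq)
    then show "y \<in> A \<inter> {y. is_top (pos j - y) 0 T j}" using y by auto
  next
    fix y assume y: "y \<in> A \<inter> {y. is_top (pos j - y) 0 T j}"
    then have "0 < y" "y < 1" using A(2) by auto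
    then show "y \<in> (\<lambda>y. pos j - y) -` ({pos j - 1..<pos j - 1 + 1} \<inter> W)"
      using y by (simp add: W_def wait_self frac_eq)
  qed
  finally show ?thesis unfolding W_def .
qed

lemma AE_frac_offsets_ne: "AE y in lborel. \<forall>j<K. \<forall>j'<K. frac (pos j' - pos j + y) \<noteq> T"
proof -
  define Z where "Z = (\<Union>j\<in>{..<K}. \<Union>j'\<in>{..<K}. range (\<lambda>k::int. T - (pos j' - pos j) + of_int k))"
  have Z: "Z \<in> null_sets lborel" unfolding Z_def by (intro countable_imp_null_set_lborel) auto
  have off_Z: "frac (pos j' - pos j + y) \<noteq> T" if "y \<notin> Z" "j < K" "j' < K" for y j j'
  proof
    assume "frac (pos j' - pos j + y) = T"
    then have "y = T - (pos j' - pos j) + of_int \<lfloor>pos j' - pos j + y\<rfloor>" by (simp add: frac_def)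
    then show False using that unfolding Z_def by blast
  qed
  from AE_not_in[OF Z] show ?thesis by (rule eventually_mono) (use off_Z in blast)
qed

lemma AE_sum_indicator_eq_top_density:
  assumes T: "T < 1" and A: "A \<subseteq> {0<..<T}"
  shows "AE y in lborel. (\<Sum>j<K. indicator (A \<inter> {y. is_top (pos j - y) 0 T j}) y)
    = ennreal (top_density T y) * indicator A y"
  using AE_frac_offsets_ne[of T]
proof eventually_elim
  case (elim y)
  show ?case
  proof (cases "y \<in> A")
    case True
    then have y: "0 < y" "y \<le> T" using A by auto
    have "(\<Sum>j<K. indicator (A \<inter> {y. is_top (pos j - y) 0 T j}) y) = (\<Sum>j<K. ennreal (if counts T y j then 1 else 0))"
    proof (rule sum.cong)
      fix j assume "j \<in> {..<K}"
      then have "is_top (pos j - y) 0 T j = counts T y j"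
        using is_top_reflect_iff[OF y T] elim by auto
      then show "indicator (A \<inter> {y. is_top (pos j - y) 0 T j}) y = ennreal (if counts T y j then 1 else 0)"
        using True by (simp add: indicator_def)
    qed simp
    also have "\<dots> = ennreal (top_density T y)" unfolding top_density_def by (subst sum_ennreal) auto
    finally show ?thesis using True by simp
  qed simp
qed

lemma law_top_loc:
  assumes T: "0 < T" "T < 1" and A: "A \<in> sets borel" "A \<subseteq> {0<..<T}"
  shows "emeasure random_phase_space {\<omega> \<in> space random_phase_space. top_ILF (random_cosine \<omega>) 0 T \<in> ereal ` A}
    = (\<integral>\<^sup>+y\<in>A. ennreal (top_density T y) \<partial>lborel)"
proof -
  define E where "E j = {y. is_top (pos j - y) 0 T j}" for j
  have Es: "E j \<in> sets borel" for j
  proof -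
    have "(\<lambda>y. pos j - y) \<in> borel_measurable borel" by simp
    then have "Measurable.pred borel (\<lambda>y. is_top (pos j - y) 0 T j)"
      using measurable_compose[OF _ is_top_measurable] by blast
    then show ?thesis unfolding E_def by (simp add: pred_def)
  qed
  have "0 \<notin> A" "A \<subseteq> {0<..<1}" using A(2) T by auto
  then have "emeasure random_phase_space {\<omega> \<in> space random_phase_space. top_ILF (random_cosine \<omega>) 0 T \<in> ereal ` A}
      = (\<Sum>j<K. emeasure lborel (A \<inter> E j))"
    using emeasure_top_ILF_event emeasure_top_loc_event_sum emeasure_top_visit_reflect A(1)
    unfolding E_def by simp
  also have "\<dots> = (\<integral>\<^sup>+y. (\<Sum>j<K. indicator (A \<inter> E j) y) \<partial>lborel)"
  proof -
    have "(\<Sum>j<K. emeasure lborel (A \<inter> E j)) = (\<Sum>j<K. \<integral>\<^sup>+y. indicator (A \<inter> E j) y \<partial>lborel)"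
      using A(1) Es by simp
    also have "\<dots> = (\<integral>\<^sup>+y. (\<Sum>j<K. indicator (A \<inter> E j) y) \<partial>lborel)"
      by (rule nn_integral_sum[symmetric]) (use A(1) Es in auto)
    finally show ?thesis .
  qed
  also have "\<dots> = (\<integral>\<^sup>+y\<in>A. ennreal (top_density T y) \<partial>lborel)"
    using AE_sum_indicator_eq_top_density[OF T(2) A(2)] unfolding E_def by (rule nn_integral_cong_AE)
  finally show ?thesis .
qed

end

section \<open>Local constancy of the density\<close>

lemma frac_add_eq:
  fixes x e :: real
  assumes "0 \<le> frac x + e + of_int n" "frac x + e + of_int n < 1"
  shows "frac (x + e) = frac x + e + of_int n"
proof -
  have "x + e - (frac x + e + of_int n) = of_int (\<lfloor>x\<rfloor> - n)" by (simp add: frac_def)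
  then show ?thesis using assms unfolding frac_unique_iff by (metis Ints_of_int)
qed

lemma eventually_frac_threshold_at_right:
  fixes T c y :: real
  assumes "T \<le> 1"
  shows "eventually (\<lambda>z. (T \<le> frac (c + z)) = (T \<le> frac (c + y))) (at_right y)"
proof -
  define r where "r = frac (c + y)"
  have r: "0 \<le> r" "r < 1" unfolding r_def by (simp_all add: frac_lt_1)
  have shift: "frac (c + z) = r + (z - y)" if "y < z" "z < y + (1 - r)" for z
    using frac_add_eq[of "c + y" "z - y" 0] that r unfolding r_def by (simp add: algebra_simps)
  show ?thesis
    unfolding eventually_at_right_field
  proof (cases "T \<le> r")
    case True
    show "\<exists>b>y. \<forall>z>y. z < b \<longrightarrow> (T \<le> frac (c + z)) = (T \<le> frac (c + y))"
      using True r shift unfolding r_def[symmetric] by (intro exI[of _ "y + (1 - r)"]) auto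
  next
    case False
    show "\<exists>b>y. \<forall>z>y. z < b \<longrightarrow> (T \<le> frac (c + z)) = (T \<le> frac (c + y))"
      using False r shift assms unfolding r_def[symmetric] by (intro exI[of _ "y + (T - r)"]) auto
  qed
qed

lemma eventually_frac_threshold_at_left:
  fixes T c y :: real
  assumes "0 < T" "T < 1"
  shows "\<exists>P. eventually (\<lambda>z. (T \<le> frac (c + z)) = P) (at_left y)"
proof -
  define r where "r = frac (c + y)"
  have r: "0 \<le> r" "r < 1" unfolding r_def by (simp_all add: frac_lt_1)
  have shift: "frac (c + z) = r + (z - y)" if "y - r \<le> z" "z < y" for z
    using frac_add_eq[of "c + y" "z - y" 0] that r unfolding r_def by (simp add: algebra_simps)
  have wrap: "frac (c + z) = 1 + (z - y)" if "r = 0" "y - 1 < z" "z < y" for z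
    using frac_add_eq[of "c + y" "z - y" 1] that unfolding r_def by (simp add: algebra_simps)
  consider "r = 0" | "0 < r" "T < r" | "0 < r" "r \<le> T" using r by linarith
  then show ?thesis
    unfolding eventually_at_left_field
  proof cases
    case 1
    then show "\<exists>P b. b < y \<and> (\<forall>z>b. z < y \<longrightarrow> (T \<le> frac (c + z)) = P)"
      using wrap assms by (intro exI[of _ True] exI[of _ "y - (1 - T)"]) auto
  next
    case 2
    then show "\<exists>P b. b < y \<and> (\<forall>z>b. z < y \<longrightarrow> (T \<le> frac (c + z)) = P)"
      using shift assms by (intro exI[of _ True] exI[of _ "y - (r - T)"]) auto
  next
    case 3
    then show "\<exists>P b. b < y \<and> (\<forall>z>b. z < y \<longrightarrow> (T \<le> frac (c + z)) = P)"
      using shift assms by (intro exI[of _ False] exI[of _ "y - r"]) auto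
  qed
qed

context ranked_sites
begin

lemma counts_eventually_at_right:
  assumes "T \<le> 1"
  shows "eventually (\<lambda>z. counts T z j = counts T y j) (at_right y)"
proof -
  have "eventually (\<lambda>z. \<forall>j'\<in>{..<K}. (T \<le> frac (pos j' - pos j + z)) = (T \<le> frac (pos j' - pos j + y))) (at_right y)"
    using eventually_frac_threshold_at_right[OF assms] by (intro eventually_ball_finite) auto
  then show ?thesis by (rule eventually_mono) (simp add: counts_def)
qed

lemma counts_eventually_at_left:
  assumes "0 < T" "T < 1"
  shows "\<exists>P. eventually (\<lambda>z. counts T z j = P) (at_left y)"
proof -
  have "\<forall>j'\<in>{..<K}. \<exists>P. eventually (\<lambda>z. (T \<le> frac (pos j' - pos j + z)) = P) (at_left y)"
    using eventually_frac_threshold_at_left[OF assms] by blast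
  then obtain P where "\<forall>j'\<in>{..<K}. eventually (\<lambda>z. (T \<le> frac (pos j' - pos j + z)) = P j') (at_left y)"
    by (metis bchoice)
  then have "eventually (\<lambda>z. \<forall>j'\<in>{..<K}. (T \<le> frac (pos j' - pos j + z)) = P j') (at_left y)"
    by (intro eventually_ball_finite) auto
  then have "eventually (\<lambda>z. counts T z j = (\<forall>j'\<in>{..<K}. level j < level j' \<longrightarrow> P j')) (at_left y)"
    by (rule eventually_mono) (simp add: counts_def)
  then show ?thesis by blast
qed

lemma top_density_eventually_at_right:
  assumes "T \<le> 1"
  shows "eventually (\<lambda>z. top_density T z = top_density T y) (at_right y)"
proof -
  have "eventually (\<lambda>z. \<forall>j\<in>{..<K}. counts T z j = counts T y j) (at_right y)"
    using counts_eventually_at_right[OF assms] by (intro eventually_ball_finite) auto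
  then show ?thesis by (rule eventually_mono) (simp add: top_density_def)
qed

lemma top_density_eventually_at_left:
  assumes "0 < T" "T < 1"
  shows "\<exists>l. eventually (\<lambda>z. top_density T z = l) (at_left y)"
proof -
  obtain P where "\<forall>j\<in>{..<K}. eventually (\<lambda>z. counts T z j = P j) (at_left y)"
    using counts_eventually_at_left[OF assms] by (metis bchoice)
  then have "eventually (\<lambda>z. \<forall>j\<in>{..<K}. counts T z j = P j) (at_left y)"
    by (intro eventually_ball_finite) auto
  then have "eventually (\<lambda>z. top_density T z = (\<Sum>j<K. if P j then 1 else 0)) (at_left y)"
    by (rule eventually_mono) (simp add: top_density_def)
  then show ?thesis by blast
qed

lemma cadlag_density_top_density:
  assumes "0 < T" "T < 1"
  shows "cadlag_density_on T random_phase_space (\<lambda>\<omega>. top_ILF (random_cosine \<omega>) 0 T) (top_density T)"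
  unfolding cadlag_density_on_def
proof (intro conjI ballI impI)
  fix y
  show "0 \<le> top_density T y" unfolding top_density_def by (intro sum_nonneg) auto
  show "continuous (at_right y) (top_density T)"
    using top_density_eventually_at_right[of T y] assms
    by (simp add: continuous_within tendsto_eventually)
  show "\<exists>l. (top_density T \<longlongrightarrow> l) (at_left y)"
    using top_density_eventually_at_left[OF assms, of y] by (blast intro: tendsto_eventually)
next
  fix A :: "real set" assume "A \<in> sets borel" "A \<subseteq> {0<..<T}"
  then show "emeasure random_phase_space {\<omega> \<in> space random_phase_space. top_ILF (random_cosine \<omega>) 0 T \<in> ereal ` A}
      = (\<integral>\<^sup>+x\<in>A. ennreal (top_density T x) \<partial>lborel)"
    using law_top_loc assms by simp
qed

end

section \<open>Attaining the bound\<close>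

lemma exists_wider_spacing:
  fixes \<delta> G :: real
  assumes "0 < \<delta>" "real k * \<delta> < G"
  obtains d where "\<delta> < d" "real k * d < G"
proof
  define \<eta> where "\<eta> = (G - real k * \<delta>) / (real k + 1)"
  have "0 < \<eta>" using assms unfolding \<eta>_def by simp
  then show "\<delta> < \<delta> + \<eta>" by simp
  have "real k * \<eta> < G - real k * \<delta>"
    using assms unfolding \<eta>_def by (simp add: field_simps)
  then show "real k * (\<delta> + \<eta>) < G" by (simp add: algebra_simps)
qed

text \<open>Site \<open>0\<close> sits at phase \<open>0\<close> with the top level; sites \<open>1, \<dots>, k + 1\<close> form a comb of
  spacing \<open>d\<close> starting \<open>e + t\<close> after it. Levels decrease along the comb when
  \<open>\<delta> = t\<close> and increase when \<open>\<delta> = T - t\<close>.\<close>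

definition comb_pos :: "real \<Rightarrow> real \<Rightarrow> real \<Rightarrow> nat \<Rightarrow> real" where
  "comb_pos e d t j = (if j = 0 then 0 else e + real (j - 1) * d + t)"

definition comb_level :: "bool \<Rightarrow> nat \<Rightarrow> nat \<Rightarrow> nat" where
  "comb_level b k j = (if j = 0 then k + 2 else if b then k + 2 - j else j)"

lemma ranked_sites_comb: "ranked_sites (k + 2) (comb_level b k) 0"
  by unfold_locales (auto simp: comb_level_def inj_on_def)

lemma comb_counts:
  fixes T t \<delta> d e :: real
  assumes t: "0 < t" "t < T" and \<delta>: "if b then \<delta> = t else \<delta> = T - t" "\<delta> < d"
    and e: "0 < e" "e + real k * d < 1 - T" and j: "j < k + 2"
  shows "ranked_sites.counts (k + 2) (comb_pos e d t) (comb_level b k) T t j"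
  unfolding ranked_sites.counts_def[OF ranked_sites_comb[of k b]]
proof (intro ballI impI)
  fix j' assume j': "j' \<in> {..<k + 2}" and higher: "comb_level b k j < comb_level b k j'"
  have "0 \<le> d" using \<delta> t by (auto split: if_splits)
  have j0: "j \<noteq> 0" using higher j' unfolding comb_level_def by (auto split: if_splits)
  define i where "i = j - 1"
  have i: "j = i + 1" "i \<le> k" using j0 j unfolding i_def by auto
  have id: "0 \<le> real i * d" "real i * d \<le> real k * d" using i(2) \<open>0 \<le> d\<close> by (simp_all add: mult_right_mono)
  show "T \<le> frac (comb_pos e d t j' - comb_pos e d t j + t)"
  proof (cases "j' = 0")
    case True
    have "frac (comb_pos e d t j' - comb_pos e d t j + t) = 1 - (e + real i * d)"
      using frac_add_eq[of 0 "- (e + real i * d)" 1] True i id e \<open>0 \<le> d\<close> t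
      by (simp add: comb_pos_def)
    then show ?thesis using id e by simp
  next
    case False
    define i' where "i' = j' - 1"
    have i': "j' = i' + 1" "i' \<le> k" using False j' unfolding i'_def by auto
    have diff: "comb_pos e d t j' - comb_pos e d t j + t = (real i' - real i) * d + t"
      using i i' unfolding comb_pos_def by (simp add: algebra_simps)
    show ?thesis
    proof (cases b)
      case True
      then have "i' < i" and dt: "\<delta> = t" using higher i i' \<delta>(1) unfolding comb_level_def by auto
      then have m: "1 \<le> real i - real i'" "real i - real i' \<le> real k" using i(2) i'(2) by auto
      have "d \<le> (real i - real i') * d" using mult_right_mono[OF m(1) \<open>0 \<le> d\<close>] by simp
      moreover have "(real i - real i') * d \<le> real k * d" using mult_right_mono[OF m(2) \<open>0 \<le> d\<close>] .
      moreover have "frac ((real i' - real i) * d + t) = (real i' - real i) * d + t + 1"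
        using frac_add_eq[of 0 "(real i' - real i) * d + t" 1] calculation dt \<delta>(2) e t
        by (simp add: algebra_simps)
      ultimately show ?thesis unfolding diff using e t by (simp add: algebra_simps)
    next
      case False
      then have "i < i'" and dt: "\<delta> = T - t" using higher i i' \<delta>(1) unfolding comb_level_def by auto
      then have m: "1 \<le> real i' - real i" "real i' - real i \<le> real k" using i(2) i'(2) by auto
      have "d \<le> (real i' - real i) * d" using mult_right_mono[OF m(1) \<open>0 \<le> d\<close>] by simp
      moreover have "(real i' - real i) * d \<le> real k * d" using mult_right_mono[OF m(2) \<open>0 \<le> d\<close>] .
      moreover have "frac ((real i' - real i) * d + t) = (real i' - real i) * d + t"
        using frac_add_eq[of 0 "(real i' - real i) * d + t" 0] calculation dt \<delta>(2) e t
        by (simp add: algebra_simps)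
      ultimately show ?thesis unfolding diff using dt \<delta>(2) by simp
    qed
  qed
qed

lemma exists_process_with_density_at:
  fixes T t \<delta> :: real
  assumes T: "0 < T" "T < 1" and t: "0 < t" "t < T"
    and \<delta>: "if b then \<delta> = t else \<delta> = T - t" and nint: "(1 - T) / \<delta> \<notin> \<int>"
  shows "\<exists>(H :: (real \<Rightarrow> real) set) L (M :: (real \<Rightarrow> real) measure) X f.
           periodic_shift_class H \<and> invariant_ILF H L \<and> periodic_stationary_process H M X \<and>
           cadlag_density_on T M (\<lambda>\<omega>. L (X \<omega>) 0 T) f \<and> f t = real (nat \<lfloor>(1 - T) / \<delta>\<rfloor>) + 2"
proof -
  have "0 < \<delta>" using \<delta> t by (auto split: if_splits)
  define k where "k = nat \<lfloor>(1 - T) / \<delta>\<rfloor>"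
  have "0 \<le> \<lfloor>(1 - T) / \<delta>\<rfloor>" using T \<open>0 < \<delta>\<close> by simp
  then have "real k = of_int \<lfloor>(1 - T) / \<delta>\<rfloor>" unfolding k_def by simp
  moreover have "of_int \<lfloor>(1 - T) / \<delta>\<rfloor> \<noteq> (1 - T) / \<delta>" using nint by (metis Ints_of_int)
  ultimately have "real k < (1 - T) / \<delta>" by (metis of_int_floor_le order_le_imp_less_or_eq)
  then have "real k * \<delta> < 1 - T" using \<open>0 < \<delta>\<close> by (simp add: less_divide_eq)
  then obtain d where d: "\<delta> < d" "real k * d < 1 - T" using exists_wider_spacing \<open>0 < \<delta>\<close> by blast
  define e where "e = (1 - T - real k * d) / 2"
  have e: "0 < e" "e + real k * d < 1 - T" using d unfolding e_def by (auto simp: field_simps)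
  interpret ranked_sites "k + 2" "comb_pos e d t" "comb_level b k" 0 by (rule ranked_sites_comb)
  have "top_density T t = real k + 2"
    using comb_counts[OF t \<delta> d(1) e] unfolding top_density_def by simp
  then show ?thesis
    using periodic_shift_class_cosine_shifts invariant_ILF_top_ILF periodic_stationary_process_random_cosine
      cadlag_density_top_density[OF T] unfolding k_def by blast
qed

lemma density_bound_eq_min:
  assumes "0 < t" "t < T" "T \<le> 1"
  shows "density_bound T t = real (nat \<lfloor>(1 - T) / min t (T - t)\<rfloor>) + 2"
proof (cases "t \<le> T - t")
  case True
  then have "\<lfloor>(1 - T) / (T - t)\<rfloor> \<le> \<lfloor>(1 - T) / t\<rfloor>" "0 \<le> \<lfloor>(1 - T) / t\<rfloor>"
    using assms by (auto intro!: floor_mono divide_left_mono)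
  then show ?thesis using True unfolding density_bound_def by simp
next
  case False
  then have "\<lfloor>(1 - T) / t\<rfloor> \<le> \<lfloor>(1 - T) / (T - t)\<rfloor>" "0 \<le> \<lfloor>(1 - T) / (T - t)\<rfloor>"
    using assms by (auto intro!: floor_mono divide_left_mono)
  then show ?thesis using False unfolding density_bound_def by simp
qed

lemma density_bound_attained:
  fixes T t :: real
  assumes T: "0 < T" "T \<le> 1"
    and c: "(0 < t \<and> t < T / 2 \<and> (1 - T) / t \<notin> \<int>) \<or> (T / 2 \<le> t \<and> t < T \<and> (1 - T) / (T - t) \<notin> \<int>)"
  shows "\<exists>(H :: (real \<Rightarrow> real) set) L (M :: (real \<Rightarrow> real) measure) X f.
           periodic_shift_class H \<and> invariant_ILF H L \<and> periodic_stationary_process H M X \<and>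
           cadlag_density_on T M (\<lambda>\<omega>. L (X \<omega>) 0 T) f \<and> f t = density_bound T t"
proof -
  have T1: "T < 1" using T c by (cases "T = 1") auto
  have t: "0 < t" "t < T" using c T by auto
  define \<delta> where "\<delta> = min t (T - t)"
  have "if t < T / 2 then \<delta> = t else \<delta> = T - t" "(1 - T) / \<delta> \<notin> \<int>"
    using c unfolding \<delta>_def by auto
  from exists_process_with_density_at[OF T(1) T1 t this] show ?thesis
    unfolding density_bound_eq_min[OF t T(2)] \<delta>_def .
qed

theorem mainTheorem9:
  shows "(\<forall>(H :: (real \<Rightarrow> real) set) L (M :: 'w measure) X T f t.
            periodic_shift_class H \<and> invariant_ILF H L \<and> periodic_stationary_process H M X \<and>
            0 < T \<and> T \<le> 1 \<and> cadlag_density_on T M (\<lambda>\<omega>. L (X \<omega>) 0 T) f \<and> t \<in> {0<..<T}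
            \<longrightarrow> f t \<le> density_bound T t)
       \<and> (\<forall>T t. 0 < T \<and> T \<le> 1 \<and>
            ((0 < t \<and> t < T / 2 \<and> (1 - T) / t \<notin> \<int>) \<or>
             (T / 2 \<le> t \<and> t < T \<and> (1 - T) / (T - t) \<notin> \<int>))
            \<longrightarrow> (\<exists>(H :: (real \<Rightarrow> real) set) L (M :: (real \<Rightarrow> real) measure) X f.
                   periodic_shift_class H \<and> invariant_ILF H L \<and>
                   periodic_stationary_process H M X \<and>
                   cadlag_density_on T M (\<lambda>\<omega>. L (X \<omega>) 0 T) f \<and>
                   f t = density_bound T t))"
  using cadlag_density_le_density_bound density_bound_attained by blast

end
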